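(* $\mathrm{P}^*_{\mathrm{lsis}}=\mathrm{NP/poly}$, where each Boolean function family $(f_n)_{n\in\mathbb N}$ is identified with the language $\{w\in\mathbb B^*: f_{|w|}(w)=T\}$.
   Context: $\mathbb B=\{T,F\}$. $\mathrm{NP/poly}$ is the usual class of languages decided by nondeterministic polynomial-time Turing machines taking polynomial-length advice (equivalently, languages $L$ for which there are $k$ and $g\in\mathrm{P/poly}$ with $w\in L$ iff $\exists c\in\mathbb B^*$, $|c|\le|w|^k$, $g(w,c)=T$). A primitive instruction is one of: a plain basic instruction $a$, a positive test instruction $+a$, a negative test instruction $-a$, a forward jump instruction $\#l$ ($l\in\mathbb N$), or the termination instruction $!$. An instruction sequence is a finite nonempty sequence $X=u_1;\dots;u_k$ of primitive instructions; $|X|=k$. $\mathrm{SIS}_{br}$ is the set of instruction sequences all of whose basic instructions belong to $\{\mathrm{in}{:}i.\mathrm{get}: i\ge1\}\cup\{\mathrm{out}.\mathrm{set}{:}T\}\cup\{\mathrm{split}(\mathrm{par}{:}i),\mathrm{reply}(\mathrm{par}{:}i): i\ge1\}$, where $\mathrm{in}{:}i$, $\mathrm{out}$ name Boolean registers and $\mathrm{par}{:}i$ are Boolean parameters. Splitting execution of $X\in\mathrm{SIS}_{br}$ on input $b\in\mathbb B^n$ is a finite tree of branches; each branch has a counter (initially 1) and a partial assignment $\sigma$ of Boolean parameters (initially empty). A branch deadlocks if its counter exceeds $k$, if it reaches $\#0$, if it executes $\mathrm{in}{:}j.\mathrm{get}$ with $j>n$, if it executes $\mathrm{reply}(p)$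 with $\sigma(p)$ undefined, or if it executes $\mathrm{split}(p)$ with $\sigma(p)$ defined. At position $i$: $!$ terminates the branch successfully; $\#l$ ($l>0$) moves the counter to $i+l$; for $u_i\in\{a,+a,-a\}$ the basic instruction $a$ yields reply $r$ ($\mathrm{in}{:}j.\mathrm{get}$ yields $b_j$; $\mathrm{out}.\mathrm{set}{:}T$ yields $T$; $\mathrm{reply}(p)$ yields $\sigma(p)$; $\mathrm{split}(p)$ with $\sigma(p)$ undefined replaces the branch by two branches, one with $r=T$ and assignment $\sigma\cup\{p\mapsto T\}$ and one with $r=F$ and assignment $\sigma\cup\{p\mapsto F\}$), and the counter becomes $i+1$ for $a$; for $+a$: $i+1$ if $r=T$, $i+2$ if $r=F$; for $-a$: $i+1$ if $r=F$, $i+2$ if $r=T$. $X$ splitting computes $f:\mathbb B^n\to\mathbb B$ if for every $b\in\mathbb B^n$, every branch terminates successfully, and $f(b)=T$ iff some branch executes $\mathrm{out}.\mathrm{set}{:}T$. $\mathrm{P}^*_{\mathrm{lsis}}$ is the class of Boolean function families $(f_n)_{n\in\mathbb N}$, $f_n:\mathbb B^n\to\mathbb B$, for which there is a polynomial $h$ such that for every $n$ some $X\in\mathrm{SIS}_{br}$ splitting computes $f_n$ with $|X|\le h(n)$. *)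

theory Defs
  imports Main
begin

datatype basic =
    InGet nat
  | OutSetT
  | Split nat
  | Reply nat

datatype prim =
    Plain basic
  | PosTest basic
  | NegTest basic
  | FJmp nat
  | Term

fun basic_of :: "prim \<Rightarrow> basic option" where
  "basic_of (Plain a) = Some a"
| "basic_of (PosTest a) = Some a"
| "basic_of (NegTest a) = Some a"
| "basic_of _ = None"

fun basic_ok :: "basic \<Rightarrow> bool" where
  "basic_ok (InGet i) = (i \<ge> 1)"
| "basic_ok OutSetT = True"
| "basic_ok (Split i) = (i \<ge> 1)"
| "basic_ok (Reply i) = (i \<ge> 1)"

definition SIS_br :: "prim list set" where
  "SIS_br = {X. X \<noteq> [] \<and> (\<forall>u\<in>set X. \<forall>a. basic_of u = Some a \<longrightarrow> basic_ok a)}"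

fun next_pc :: "prim \<Rightarrow> nat \<Rightarrow> bool \<Rightarrow> nat" where
  "next_pc (PosTest a) pc r = (if r then pc + 1 else pc + 2)"
| "next_pc (NegTest a) pc r = (if r then pc + 2 else pc + 1)"
| "next_pc _ pc r = pc + 1"

lemma next_pc_gt: "pc < next_pc u pc r"
  by (cases u) auto

text \<open>Reply of a non-splitting basic instruction (None = deadlock).
  Input registers in:1 .. in:n hold b_1 .. b_n (list positions 0 .. n-1).\<close>
fun basic_reply :: "bool list \<Rightarrow> (nat \<Rightarrow> bool option) \<Rightarrow> basic \<Rightarrow> bool option" where
  "basic_reply b \<sigma> (InGet j) = (if 1 \<le> j \<and> j \<le> length b then Some (b ! (j - 1)) else None)"
| "basic_reply b \<sigma> OutSetT = Some True"
| "basic_reply b \<sigma> (Reply p) = \<sigma> p"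
| "basic_reply b \<sigma> (Split p) = None"

text \<open>Outcome of a leaf branch: deadlock, or successful termination together with the
  information whether out.set:T was executed on the path from the root to this leaf.\<close>
datatype outcome = Deadlock | Ok bool

text \<open>All leaves of the splitting execution starting from counter pc, parameter
  assignment sigma and flag fl (out.set:T already executed).\<close>
function run :: "prim list \<Rightarrow> bool list \<Rightarrow> nat \<Rightarrow> (nat \<Rightarrow> bool option) \<Rightarrow> bool \<Rightarrow> outcome list" where
  "run X b pc \<sigma> fl =
    (if pc = 0 \<or> length X < pc then [Deadlock] else
     (let u = X ! (pc - 1) in
      case u of
        Term \<Rightarrow> [Ok fl]
      | FJmp l \<Rightarrow> (if l = 0 then [Deadlock] else run X b (pc + l) \<sigma> fl)
      | _ \<Rightarrow>
        (let a = the (basic_of u); fl' = (fl \<or> a = OutSetT) in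
         case a of
           Split p \<Rightarrow>
             (case \<sigma> p of
                Some _ \<Rightarrow> [Deadlock]
              | None \<Rightarrow> run X b (next_pc u pc True) (\<sigma>(p \<mapsto> True)) fl'
                        @ run X b (next_pc u pc False) (\<sigma>(p \<mapsto> False)) fl')
         | _ \<Rightarrow>
             (case basic_reply b \<sigma> a of
                None \<Rightarrow> [Deadlock]
              | Some r \<Rightarrow> run X b (next_pc u pc r) \<sigma> fl'))))"
  by pat_completeness auto
termination
  by (relation "measure (\<lambda>(X, b, pc, \<sigma>, fl). Suc (length X) - pc)")
     (auto simp: next_pc_gt diff_less_mono2 less_Suc_eq_le)

definition splitting_computes :: "prim list \<Rightarrow> nat \<Rightarrow> (bool list \<Rightarrow> bool) \<Rightarrow> bool" where
  "splitting_computes X n f \<longleftrightarrow>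
     (\<forall>b. length b = n \<longrightarrow>
        (let R = run X b 1 Map.empty False in
           Deadlock \<notin> set R \<and> (f b \<longleftrightarrow> Ok True \<in> set R)))"

definition poly_bounded :: "(nat \<Rightarrow> nat) \<Rightarrow> bool" where
  "poly_bounded h \<longleftrightarrow> (\<exists>c k. \<forall>n. h n \<le> c * n ^ k + c)"

text \<open>Boolean function families (f_n) with f_n : B^n -> B (only the values of f n on
  lists of length n matter).\<close>
definition P_lsis :: "(nat \<Rightarrow> bool list \<Rightarrow> bool) set" where
  "P_lsis = {f. \<exists>h. poly_bounded h \<and>
                 (\<forall>n. \<exists>X \<in> SIS_br. length X \<le> h n \<and> splitting_computes X n (f n))}"

definition lang_of :: "(nat \<Rightarrow> bool list \<Rightarrow> bool) \<Rightarrow> bool list set" where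
  "lang_of f = {w. f (length w) w}"

text \<open>Straight-line Boolean circuits: gate i may refer to inputs and to earlier gates
  (wires 0 .. i-1); dangling references read False. Output = last gate.\<close>
datatype gate = GIn nat | GConst bool | GNot nat | GAnd nat nat | GOr nat nat

definition wire :: "bool list \<Rightarrow> nat \<Rightarrow> bool" where
  "wire vs i = (i < length vs \<and> vs ! i)"

fun gate_val :: "bool list \<Rightarrow> bool list \<Rightarrow> gate \<Rightarrow> bool" where
  "gate_val x vs (GIn i) = wire x i"
| "gate_val x vs (GConst c) = c"
| "gate_val x vs (GNot i) = (\<not> wire vs i)"
| "gate_val x vs (GAnd i j) = (wire vs i \<and> wire vs j)"
| "gate_val x vs (GOr i j) = (wire vs i \<or> wire vs j)"

fun eval_gates :: "bool list \<Rightarrow> gate list \<Rightarrow> bool list \<Rightarrow> bool list" where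
  "eval_gates x [] vs = vs"
| "eval_gates x (g # gs) vs = eval_gates x gs (vs @ [gate_val x vs g])"

definition circ_eval :: "gate list \<Rightarrow> bool list \<Rightarrow> bool" where
  "circ_eval C x = (let vs = eval_gates x C [] in vs \<noteq> [] \<and> last vs)"

definition Ppoly2 :: "(bool list \<Rightarrow> bool list \<Rightarrow> bool) \<Rightarrow> bool" where
  "Ppoly2 g \<longleftrightarrow> (\<exists>h. poly_bounded h \<and>
      (\<forall>n m. \<exists>C. length C \<le> h (n + m) \<and>
         (\<forall>w c. length w = n \<longrightarrow> length c = m \<longrightarrow> circ_eval C (w @ c) = g w c)))"

definition NPpoly :: "bool list set set" where
  "NPpoly = {L. \<exists>k g. Ppoly2 g \<and>
      (\<forall>w. w \<in> L \<longleftrightarrow> (\<exists>c. length c \<le> length w ^ k \<and> g w c))}"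

end

theory Submission
  imports Defs "HOL-Library.Nat_Bijection"
begin

text \<open>
  NP/poly is contained in P*_lsis: let L be given by a verifier g in P/poly with certificates of
  length at most n^k, and choose circuits C n l for g on inputs of length n and certificates of length l.
  For input length n the instruction sequence tries every certificate length l up to n^k.  It splits on
  one fresh parameter per certificate bit and per gate of C n l, assumes the gate equations in the
  form of clauses (a Tseitin encoding; a violated clause ends the branch without output) and outputs
  the value of the output gate.  These programs are written in a small structured language that is
  compiled to instruction sequences; its accepting branches are exactly the total parameter
  assignments satisfying all clauses of some block and its output literal.

  P*_lsis is contained in NP/poly: a branch of a splitting execution is determined by a total
  assignment of the parameters, and some branch executes out.set:T iff for some total assignment an
  out.set:T instruction is reachable under the induced deterministic step function.  A certificate
  lists the values of the parameters occurring in X and the set of reached positions; a formula of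
  size quadratic in |X| checks it, and formulas compile into circuits.
\<close>

declare run.simps[simp del]

section \<open>Running instruction sequences\<close>

lemma next_pc_add: "next_pc u (a + pc) r = a + next_pc u pc r"
  by (cases u) auto

lemma run_out_of_range: "pc = 0 \<or> length X < pc \<Longrightarrow> run X b pc \<sigma> fl = [Deadlock]"
  by (subst run.simps) simp

lemma run_shift: "pc \<ge> 1 \<Longrightarrow> run (A @ Y) b (length A + pc) \<sigma> fl = run Y b pc \<sigma> fl"
proof (induction Y b pc \<sigma> fl rule: run.induct)
  case (1 Y b pc \<sigma> fl)
  show ?case
  proof (cases "length Y < pc")
    case True
    then show ?thesis by (simp add: run_out_of_range)
  next
    case False
    have nth: "(A @ Y) ! (length A + pc - Suc 0) = Y ! (pc - Suc 0)"
      using "1.prems" nth_append_length_plus[of A Y "pc - 1"] by simp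
    show ?thesis
    proof (cases "Y ! (pc - 1)")
      case (Plain a)
      then show ?thesis using False "1.prems" "1.IH"
        by (subst (1 2) run.simps, cases a) (simp_all add: nth Let_def next_pc_add fun_upd_def split: option.split)
    next
      case (PosTest a)
      then show ?thesis using False "1.prems" "1.IH"
        by (subst (1 2) run.simps, cases a) (simp_all add: nth Let_def next_pc_add fun_upd_def split: option.split)
    next
      case (NegTest a)
      then show ?thesis using False "1.prems" "1.IH"
        by (subst (1 2) run.simps, cases a) (simp_all add: nth Let_def next_pc_add fun_upd_def split: option.split)
    qed (use False "1.prems" "1.IH" in \<open>subst (1 2) run.simps; simp add: nth add.assoc\<close>)+
  qed
qed

lemma run_Cons_shift: "pc \<ge> 1 \<Longrightarrow> run (u # Y) b (Suc pc) \<sigma> fl = run Y b pc \<sigma> fl"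
  using run_shift[of pc "[u]" Y] by simp

section \<open>Structured programs\<close>

text \<open>A small structured language over which the programs of the first inclusion are written: an
  atom reads an input bit or a parameter, a literal is a constant or a signed atom, and an operation
  splits on a parameter, assumes a clause (a false clause ends the branch without output) or
  outputs a literal (executes out.set:T if the literal holds).\<close>

datatype atom = AIn nat | APar nat

datatype lit = LConst bool | LAtom bool atom

datatype op = OSplit nat | OClause "lit list" | OOut lit

fun atom_instr :: "atom \<Rightarrow> basic" where
  "atom_instr (AIn j) = InGet j"
| "atom_instr (APar p) = Reply p"

text \<open>Literals compile to a single test instruction that continues at the next instruction iff the
  literal holds and skips it otherwise.\<close>

fun lit_code :: "lit \<Rightarrow> prim" where
  "lit_code (LConst True) = FJmp 1"
| "lit_code (LConst False) = FJmp 2"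
| "lit_code (LAtom True a) = PosTest (atom_instr a)"
| "lit_code (LAtom False a) = NegTest (atom_instr a)"

fun clause_code :: "lit list \<Rightarrow> prim list" where
  "clause_code [] = [Term]"
| "clause_code (l # ls) = [lit_code l, FJmp (2 * length ls + 2)] @ clause_code ls"

fun op_code :: "op \<Rightarrow> prim list" where
  "op_code (OSplit p) = [Plain (Split p)]"
| "op_code (OClause ls) = clause_code ls"
| "op_code (OOut l) = [lit_code l, Plain OutSetT]"

definition prog :: "op list \<Rightarrow> prim list" where
  "prog ops = concat (map op_code ops) @ [Term]"

fun lit_val :: "bool list \<Rightarrow> (nat \<Rightarrow> bool option) \<Rightarrow> lit \<Rightarrow> bool option" where
  "lit_val b \<sigma> (LConst c) = Some c"
| "lit_val b \<sigma> (LAtom pol a) = map_option (\<lambda>v. v = pol) (basic_reply b \<sigma> (atom_instr a))"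

fun clause_val :: "bool list \<Rightarrow> (nat \<Rightarrow> bool option) \<Rightarrow> lit list \<Rightarrow> bool option" where
  "clause_val b \<sigma> [] = Some False"
| "clause_val b \<sigma> (l # ls) =
     (case lit_val b \<sigma> l of None \<Rightarrow> None | Some True \<Rightarrow> Some True | Some False \<Rightarrow> clause_val b \<sigma> ls)"

fun exec :: "bool list \<Rightarrow> op list \<Rightarrow> (nat \<Rightarrow> bool option) \<Rightarrow> bool \<Rightarrow> outcome list" where
  "exec b [] \<sigma> fl = [Ok fl]"
| "exec b (OSplit p # ops) \<sigma> fl = (case \<sigma> p of Some _ \<Rightarrow> [Deadlock]
     | None \<Rightarrow> exec b ops (\<sigma>(p \<mapsto> True)) fl @ exec b ops (\<sigma>(p \<mapsto> False)) fl)"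
| "exec b (OClause ls # ops) \<sigma> fl = (case clause_val b \<sigma> ls of None \<Rightarrow> [Deadlock]
     | Some True \<Rightarrow> exec b ops \<sigma> fl | Some False \<Rightarrow> [Ok fl])"
| "exec b (OOut l # ops) \<sigma> fl = (case lit_val b \<sigma> l of None \<Rightarrow> [Deadlock]
     | Some v \<Rightarrow> exec b ops \<sigma> (fl \<or> v))"

lemma length_clause_code: "length (clause_code ls) = 2 * length ls + 1"
  by (induction ls) auto

lemma run_lit_code:
  "run (lit_code l # Y) b (Suc 0) \<sigma> fl = (case lit_val b \<sigma> l of None \<Rightarrow> [Deadlock]
      | Some True \<Rightarrow> run Y b (Suc 0) \<sigma> fl | Some False \<Rightarrow> run Y b 2 \<sigma> fl)"
proof (cases l)
  case (LConst c)
  then show ?thesis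
    by (cases c) (subst run.simps, simp add: run_Cons_shift numeral_2_eq_2)+
next
  case (LAtom pol a)
  then show ?thesis
    by (cases pol; cases a)
       (subst run.simps, simp add: run_Cons_shift numeral_2_eq_2 split: option.split)+
qed

lemma run_clause_code:
  "run (clause_code ls @ Y) b (Suc 0) \<sigma> fl = (case clause_val b \<sigma> ls of None \<Rightarrow> [Deadlock]
      | Some True \<Rightarrow> run Y b (Suc 0) \<sigma> fl | Some False \<Rightarrow> [Ok fl])"
proof (induction ls)
  case Nil
  then show ?case by (subst run.simps) simp
next
  case (Cons l ls)
  let ?Z = "FJmp (2 * length ls + 2) # clause_code ls @ Y"
  have "run ?Z b (Suc 0) \<sigma> fl = run (clause_code ls @ Y) b (2 * length ls + 2) \<sigma> fl"
    by (subst run.simps) (simp add: run_Cons_shift)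
  also have "\<dots> = run Y b (Suc 0) \<sigma> fl"
    using run_shift[of 1 "clause_code ls" Y b \<sigma> fl] by (simp add: length_clause_code)
  finally have skip: "run ?Z b (Suc 0) \<sigma> fl = run Y b (Suc 0) \<sigma> fl" .
  have next_lit: "run ?Z b 2 \<sigma> fl = run (clause_code ls @ Y) b (Suc 0) \<sigma> fl"
    using run_Cons_shift[of 1] by (simp add: numeral_2_eq_2)
  have "run (clause_code (l # ls) @ Y) b (Suc 0) \<sigma> fl = run (lit_code l # ?Z) b (Suc 0) \<sigma> fl"
    by simp
  also have "\<dots> = (case lit_val b \<sigma> l of None \<Rightarrow> [Deadlock]
      | Some True \<Rightarrow> run Y b (Suc 0) \<sigma> fl | Some False \<Rightarrow> run (clause_code ls @ Y) b (Suc 0) \<sigma> fl)"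
    by (simp only: run_lit_code skip next_lit)
  finally show ?case by (simp add: Cons.IH split: option.split bool.split)
qed

lemma prog_Cons: "prog (op1 # ops) = op_code op1 @ prog ops"
  by (simp add: prog_def)

lemma run_prog: "run (prog ops) b (Suc 0) \<sigma> fl = exec b ops \<sigma> fl"
proof (induction ops arbitrary: \<sigma> fl)
  case Nil
  then show ?case by (subst run.simps) (simp add: prog_def)
next
  case (Cons op1 ops)
  have out2: "run (Plain OutSetT # prog ops) b 2 \<sigma> fl' = run (prog ops) b (Suc 0) \<sigma> fl'" for fl'
    using run_Cons_shift[of 1] by (simp add: numeral_2_eq_2)
  show ?case
  proof (cases op1)
    case (OSplit p)
    then show ?thesis unfolding prog_Cons
      by (subst run.simps) (simp add: run_Cons_shift Cons.IH fun_upd_def split: option.split)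
  next
    case (OClause ls)
    then show ?thesis unfolding prog_Cons
      by (simp add: run_clause_code Cons.IH split: option.split bool.split)
  next
    case (OOut l)
    have out1: "run (Plain OutSetT # prog ops) b (Suc 0) \<sigma> fl = run (prog ops) b (Suc 0) \<sigma> True"
      by (subst run.simps) (simp add: run_Cons_shift)
    show ?thesis unfolding OOut prog_Cons
      using run_lit_code[of l "Plain OutSetT # prog ops"]
      by (simp add: out1 out2 Cons.IH split: option.split bool.split)
  qed
qed

fun atom_holds :: "bool list \<Rightarrow> (nat \<Rightarrow> bool) \<Rightarrow> atom \<Rightarrow> bool" where
  "atom_holds b \<tau> (AIn j) = b ! (j - 1)"
| "atom_holds b \<tau> (APar p) = \<tau> p"

fun lit_holds :: "bool list \<Rightarrow> (nat \<Rightarrow> bool) \<Rightarrow> lit \<Rightarrow> bool" where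
  "lit_holds b \<tau> (LConst c) = c"
| "lit_holds b \<tau> (LAtom pol a) = (atom_holds b \<tau> a = pol)"

definition clause_holds :: "bool list \<Rightarrow> (nat \<Rightarrow> bool) \<Rightarrow> lit list \<Rightarrow> bool" where
  "clause_holds b \<tau> ls \<longleftrightarrow> (\<exists>l\<in>set ls. lit_holds b \<tau> l)"

fun accepts :: "bool list \<Rightarrow> (nat \<Rightarrow> bool) \<Rightarrow> op list \<Rightarrow> bool \<Rightarrow> bool" where
  "accepts b \<tau> [] fl = fl"
| "accepts b \<tau> (OSplit p # ops) fl = accepts b \<tau> ops fl"
| "accepts b \<tau> (OClause ls # ops) fl = (if clause_holds b \<tau> ls then accepts b \<tau> ops fl else fl)"
| "accepts b \<tau> (OOut l # ops) fl = accepts b \<tau> ops (fl \<or> lit_holds b \<tau> l)"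

definition extends :: "(nat \<Rightarrow> bool option) \<Rightarrow> (nat \<Rightarrow> bool) \<Rightarrow> bool" where
  "extends \<sigma> \<tau> \<longleftrightarrow> (\<forall>p v. \<sigma> p = Some v \<longrightarrow> \<tau> p = v)"

definition default_ext :: "(nat \<Rightarrow> bool option) \<Rightarrow> nat \<Rightarrow> bool" where
  "default_ext \<sigma> p = (case \<sigma> p of Some v \<Rightarrow> v | None \<Rightarrow> False)"

lemma extends_default_ext: "extends \<sigma> (default_ext \<sigma>)"
  by (simp add: extends_def default_ext_def)

lemma extends_upd: "\<sigma> p = None \<Longrightarrow> extends (\<sigma>(p \<mapsto> v)) \<tau> \<longleftrightarrow> extends \<sigma> \<tau> \<and> \<tau> p = v"
  by (auto simp: extends_def)

fun wf_atom :: "nat \<Rightarrow> nat set \<Rightarrow> atom \<Rightarrow> bool" where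
  "wf_atom n D (AIn j) \<longleftrightarrow> 1 \<le> j \<and> j \<le> n"
| "wf_atom n D (APar p) \<longleftrightarrow> p \<in> D"

fun wf_lit :: "nat \<Rightarrow> nat set \<Rightarrow> lit \<Rightarrow> bool" where
  "wf_lit n D (LConst c) = True"
| "wf_lit n D (LAtom pol a) = wf_atom n D a"

fun wf_ops :: "nat \<Rightarrow> nat set \<Rightarrow> op list \<Rightarrow> bool" where
  "wf_ops n D [] = True"
| "wf_ops n D (OSplit p # ops) \<longleftrightarrow> p \<notin> D \<and> wf_ops n (insert p D) ops"
| "wf_ops n D (OClause ls # ops) \<longleftrightarrow> (\<forall>l\<in>set ls. wf_lit n D l) \<and> wf_ops n D ops"
| "wf_ops n D (OOut l # ops) \<longleftrightarrow> wf_lit n D l \<and> wf_ops n D ops"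

lemma lit_val_total:
  assumes "wf_lit (length b) (dom \<sigma>) l" and "extends \<sigma> \<tau>"
  shows "lit_val b \<sigma> l = Some (lit_holds b \<tau> l)"
proof (cases l)
  case (LAtom pol a)
  then show ?thesis using assms by (cases a) (auto simp: extends_def)
qed simp

lemma clause_val_total:
  "\<forall>l\<in>set ls. wf_lit (length b) (dom \<sigma>) l \<Longrightarrow> extends \<sigma> \<tau> \<Longrightarrow>
   clause_val b \<sigma> ls = Some (clause_holds b \<tau> ls)"
  by (induction ls) (auto simp: clause_holds_def lit_val_total split: bool.split)

lemma exec_no_deadlock: "wf_ops (length b) (dom \<sigma>) ops \<Longrightarrow> Deadlock \<notin> set (exec b ops \<sigma> fl)"
proof (induction ops arbitrary: \<sigma> fl)
  case (Cons op1 ops)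
  show ?case
  proof (cases op1)
    case (OSplit p)
    then have "\<sigma> p = None" "wf_ops (length b) (dom (\<sigma>(p \<mapsto> v))) ops" for v
      using Cons.prems by auto
    then show ?thesis using OSplit Cons.IH[of "\<sigma>(p \<mapsto> True)"] Cons.IH[of "\<sigma>(p \<mapsto> False)"]
      by (auto simp del: fun_upd_apply)
  next
    case (OClause ls)
    then show ?thesis
      using Cons clause_val_total[OF _ extends_default_ext, of ls b \<sigma>] by (auto split: bool.split)
  next
    case (OOut l)
    then show ?thesis
      using Cons lit_val_total[OF _ extends_default_ext, of b \<sigma> l] by auto
  qed
qed simp

lemma exec_accepts:
  "wf_ops (length b) (dom \<sigma>) ops \<Longrightarrow>
   Ok True \<in> set (exec b ops \<sigma> fl) \<longleftrightarrow> (\<exists>\<tau>. extends \<sigma> \<tau> \<and> accepts b \<tau> ops fl)"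
proof (induction ops arbitrary: \<sigma> fl)
  case Nil
  then show ?case using extends_default_ext by auto
next
  case (Cons op1 ops)
  show ?case
  proof (cases op1)
    case (OSplit p)
    then have p: "\<sigma> p = None" and wf: "wf_ops (length b) (dom (\<sigma>(p \<mapsto> v))) ops" for v
      using Cons.prems by auto
    have "Ok True \<in> set (exec b (op1 # ops) \<sigma> fl) \<longleftrightarrow>
       (\<exists>v. Ok True \<in> set (exec b ops (\<sigma>(p \<mapsto> v)) fl))"
      using OSplit p by (auto simp del: fun_upd_apply) (metis (full_types))
    also have "\<dots> \<longleftrightarrow> (\<exists>v \<tau>. extends (\<sigma>(p \<mapsto> v)) \<tau> \<and> accepts b \<tau> ops fl)"
      using Cons.IH[OF wf] by blast
    also have "\<dots> \<longleftrightarrow> (\<exists>\<tau>. extends \<sigma> \<tau> \<and> accepts b \<tau> (op1 # ops) fl)"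
      using OSplit by (auto simp: extends_upd[of \<sigma> p, OF p])
    finally show ?thesis .
  next
    case (OClause ls)
    then have wf: "\<forall>l\<in>set ls. wf_lit (length b) (dom \<sigma>) l" "wf_ops (length b) (dom \<sigma>) ops"
      using Cons.prems by auto
    let ?c = "clause_holds b (default_ext \<sigma>) ls"
    have val: "clause_val b \<sigma> ls = Some ?c"
      by (rule clause_val_total[OF wf(1) extends_default_ext])
    have same: "extends \<sigma> \<tau> \<Longrightarrow> clause_holds b \<tau> ls = ?c" for \<tau>
      using clause_val_total[OF wf(1)] val by simp
    show ?thesis
    proof (cases ?c)
      case True
      then show ?thesis using OClause val same Cons.IH[OF wf(2)] by auto
    next
      case False
      then have "\<not> clause_holds b \<tau> ls" if "extends \<sigma> \<tau>" for \<tau>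
        using same that by blast
      then show ?thesis using OClause val False extends_default_ext by auto
    qed
  next
    case (OOut l)
    then have wf: "wf_lit (length b) (dom \<sigma>) l" "wf_ops (length b) (dom \<sigma>) ops"
      using Cons.prems by auto
    let ?v = "lit_holds b (default_ext \<sigma>) l"
    have val: "lit_val b \<sigma> l = Some ?v"
      by (rule lit_val_total[OF wf(1) extends_default_ext])
    have same: "extends \<sigma> \<tau> \<Longrightarrow> lit_holds b \<tau> l = ?v" for \<tau>
      using lit_val_total[OF wf(1)] val by simp
    show ?thesis using OOut val same Cons.IH[OF wf(2)] by auto
  qed
qed

section \<open>NP/poly is contained in P*_lsis\<close>

lemma accepts_True: "accepts b \<tau> ops True"
  by (induction b \<tau> ops True rule: accepts.induct) auto

lemma accepts_append: "accepts b \<tau> (A @ B) False \<Longrightarrow> accepts b \<tau> A False \<or> accepts b \<tau> B False"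
proof (induction A)
  case (Cons op1 A)
  show ?case
  proof (cases op1)
    case (OOut l)
    then show ?thesis using Cons by (cases "lit_holds b \<tau> l") (auto simp: accepts_True)
  qed (use Cons in \<open>auto split: if_splits\<close>)
qed simp

lemma accepts_concat: "accepts b \<tau> (concat Bs) False \<Longrightarrow> \<exists>B\<in>set Bs. accepts b \<tau> B False"
  by (induction Bs) (auto dest: accepts_append)

lemma accepts_all_clauses:
  "\<forall>ls. OClause ls \<in> set ops \<longrightarrow> clause_holds b \<tau> ls \<Longrightarrow>
   accepts b \<tau> ops fl \<longleftrightarrow> fl \<or> (\<exists>l. OOut l \<in> set ops \<and> lit_holds b \<tau> l)"
proof (induction ops arbitrary: fl)
  case (Cons op1 ops)
  then show ?case by (cases op1) auto
qed simp

lemma accepts_splits: "accepts b \<tau> (map OSplit ps @ B) fl = accepts b \<tau> B fl"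
  by (induction ps) auto

lemma accepts_clauses:
  "accepts b \<tau> (map OClause cls @ B) fl =
   (if \<forall>cl\<in>set cls. clause_holds b \<tau> cl then accepts b \<tau> B fl else fl)"
  by (induction cls) auto

lemma eval_gates_append: "eval_gates x (A @ B) vs = eval_gates x B (eval_gates x A vs)"
  by (induction A arbitrary: vs) auto

lemma length_eval_gates: "length (eval_gates x C vs) = length vs + length C"
  by (induction C arbitrary: vs) auto

lemma eval_gates_nth:
  "i < length C \<Longrightarrow> eval_gates x C [] ! i = gate_val x (take i (eval_gates x C [])) (C ! i)"
proof (induction C arbitrary: i rule: rev_induct)
  case (snoc g C)
  then show ?case
    by (cases "i < length C") (auto simp: eval_gates_append nth_append length_eval_gates)
qed simp

lemma eval_gates_unique:
  "\<forall>i<length C. V i = gate_val x (map V [0..<i]) (C ! i) \<Longrightarrow>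
   eval_gates x C [] = map V [0..<length C]"
proof (induction C rule: rev_induct)
  case (snoc g C)
  have "eval_gates x C [] = map V [0..<length C]"
    using snoc.prems by (intro snoc.IH) (auto simp: nth_append)
  moreover have "V (length C) = gate_val x (map V [0..<length C]) g"
    using snoc.prems[rule_format, of "length C"] by simp
  ultimately show ?case by (simp add: eval_gates_append)
qed simp

text \<open>Fresh parameter names for block l: cert_par l i guesses certificate bit i, gate_par l i guesses the
  value of gate i of circuit C l.\<close>

definition cert_par :: "nat \<Rightarrow> nat \<Rightarrow> nat" where
  "cert_par l i = Suc (prod_encode (l, 2 * i))"

definition gate_par :: "nat \<Rightarrow> nat \<Rightarrow> nat" where
  "gate_par l i = Suc (prod_encode (l, Suc (2 * i)))"

lemma cert_par_eq[simp]: "cert_par l i = cert_par l' i' \<longleftrightarrow> l = l' \<and> i = i'"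
  by (auto simp: cert_par_def)

lemma gate_par_eq[simp]: "gate_par l i = gate_par l' i' \<longleftrightarrow> l = l' \<and> i = i'"
  by (auto simp: gate_par_def)

lemma cert_par_neq_gate_par[simp]: "cert_par l i \<noteq> gate_par l' i'" "gate_par l' i' \<noteq> cert_par l i"
  by (auto simp: cert_par_def gate_par_def) presburger+

fun lit_neg :: "lit \<Rightarrow> lit" where
  "lit_neg (LConst c) = LConst (\<not> c)"
| "lit_neg (LAtom pol a) = LAtom (\<not> pol) a"

text \<open>The literal reading wire j of the circuit input b @ c, where c is the guessed certificate, and the
  literal reading the guessed value of an earlier gate j (later or missing wires read False, as in
  gate_val).\<close>

definition input_lit :: "nat \<Rightarrow> nat \<Rightarrow> nat \<Rightarrow> lit" where
  "input_lit n l j =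
     (if j < n then LAtom True (AIn (Suc j))
      else if j < n + l then LAtom True (APar (cert_par l (j - n))) else LConst False)"

definition gate_lit :: "nat \<Rightarrow> nat \<Rightarrow> nat \<Rightarrow> lit" where
  "gate_lit l i j = (if j < i then LAtom True (APar (gate_par l j)) else LConst False)"

text \<open>Tseitin clauses stating that the guessed value of gate i is its gate value.\<close>

fun gate_clauses :: "nat \<Rightarrow> nat \<Rightarrow> nat \<Rightarrow> gate \<Rightarrow> lit list list" where
  "gate_clauses n l i (GIn j) =
     (let G = LAtom True (APar (gate_par l i)); W = input_lit n l j in
      [[lit_neg G, W], [G, lit_neg W]])"
| "gate_clauses n l i (GConst c) =
     (let G = LAtom True (APar (gate_par l i)) in [[if c then G else lit_neg G]])"
| "gate_clauses n l i (GNot j) =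
     (let G = LAtom True (APar (gate_par l i)); A = gate_lit l i j in
      [[lit_neg G, lit_neg A], [G, A]])"
| "gate_clauses n l i (GAnd j k) =
     (let G = LAtom True (APar (gate_par l i)); A = gate_lit l i j; B = gate_lit l i k in
      [[lit_neg G, A], [lit_neg G, B], [G, lit_neg A, lit_neg B]])"
| "gate_clauses n l i (GOr j k) =
     (let G = LAtom True (APar (gate_par l i)); A = gate_lit l i j; B = gate_lit l i k in
      [[G, lit_neg A], [G, lit_neg B], [lit_neg G, A, B]])"

definition out_lit :: "(nat \<Rightarrow> gate list) \<Rightarrow> nat \<Rightarrow> lit" where
  "out_lit C l = (if C l = [] then LConst False else LAtom True (APar (gate_par l (length (C l) - 1))))"

definition block_pars :: "(nat \<Rightarrow> gate list) \<Rightarrow> nat \<Rightarrow> nat list" where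
  "block_pars C l = map (cert_par l) [0..<l] @ map (gate_par l) [0..<length (C l)]"

definition block_clauses :: "nat \<Rightarrow> (nat \<Rightarrow> gate list) \<Rightarrow> nat \<Rightarrow> lit list list" where
  "block_clauses n C l = concat (map (\<lambda>i. gate_clauses n l i (C l ! i)) [0..<length (C l)])"

definition block :: "nat \<Rightarrow> (nat \<Rightarrow> gate list) \<Rightarrow> nat \<Rightarrow> op list" where
  "block n C l = map OSplit (block_pars C l) @ map OClause (block_clauses n C l) @ [OOut (out_lit C l)]"

definition guess_check :: "nat \<Rightarrow> nat \<Rightarrow> (nat \<Rightarrow> gate list) \<Rightarrow> op list" where
  "guess_check n M C = concat (map (block n C) [0..<Suc M])"

definition cert_of :: "(nat \<Rightarrow> bool) \<Rightarrow> nat \<Rightarrow> bool list" where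
  "cert_of \<tau> l = map (\<lambda>i. \<tau> (cert_par l i)) [0..<l]"

definition gate_vals :: "(nat \<Rightarrow> bool) \<Rightarrow> nat \<Rightarrow> nat \<Rightarrow> bool list" where
  "gate_vals \<tau> l i = map (\<lambda>j. \<tau> (gate_par l j)) [0..<i]"

lemma length_cert_of[simp]: "length (cert_of \<tau> l) = l"
  by (simp add: cert_of_def)

lemma lit_holds_neg[simp]: "lit_holds b \<tau> (lit_neg l) = (\<not> lit_holds b \<tau> l)"
  by (cases l) auto

lemma lit_holds_input_lit: "length b = n \<Longrightarrow> lit_holds b \<tau> (input_lit n l j) = wire (b @ cert_of \<tau> l) j"
  by (auto simp: input_lit_def wire_def cert_of_def nth_append)

lemma lit_holds_gate_lit: "lit_holds b \<tau> (gate_lit l i j) = wire (gate_vals \<tau> l i) j"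
  by (auto simp: gate_lit_def wire_def gate_vals_def)

lemma gate_clauses_iff:
  "length b = n \<Longrightarrow>
   (\<forall>cl\<in>set (gate_clauses n l i g). clause_holds b \<tau> cl) \<longleftrightarrow>
   \<tau> (gate_par l i) = gate_val (b @ cert_of \<tau> l) (gate_vals \<tau> l i) g"
  by (cases g) (auto simp: clause_holds_def Let_def lit_holds_input_lit lit_holds_gate_lit)

lemma block_sound:
  assumes "length b = n" "accepts b \<tau> (block n C l) False"
  shows "circ_eval (C l) (b @ cert_of \<tau> l)"
proof -
  have "accepts b \<tau> (map OClause (block_clauses n C l) @ [OOut (out_lit C l)]) False"
    using assms(2) by (simp add: block_def accepts_splits)
  then have cls: "\<forall>cl\<in>set (block_clauses n C l). clause_holds b \<tau> cl"
    and out: "lit_holds b \<tau> (out_lit C l)"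
    by (auto simp: accepts_clauses split: if_splits)
  have "\<forall>i<length (C l). \<tau> (gate_par l i) =
      gate_val (b @ cert_of \<tau> l) (map (\<lambda>j. \<tau> (gate_par l j)) [0..<i]) (C l ! i)"
    using cls gate_clauses_iff[OF assms(1)] by (auto simp: block_clauses_def gate_vals_def)
  then have "eval_gates (b @ cert_of \<tau> l) (C l) [] = map (\<lambda>j. \<tau> (gate_par l j)) [0..<length (C l)]"
    by (rule eval_gates_unique)
  moreover have "C l \<noteq> []" "\<tau> (gate_par l (length (C l) - 1))"
    using out by (auto simp: out_lit_def split: if_splits)
  ultimately show ?thesis by (simp add: circ_eval_def last_map)
qed

text \<open>Given a certificate c of length l, the honest assignment guesses c in block l, the all-False
  certificate in every other block, and in every block the true wire values of the circuit on the
  guessed certificate.\<close>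

definition cert_choice :: "nat \<Rightarrow> bool list \<Rightarrow> nat \<Rightarrow> bool list" where
  "cert_choice l c l' = (if l' = l then c else replicate l' False)"

definition honest_wires :: "bool list \<Rightarrow> (nat \<Rightarrow> gate list) \<Rightarrow> nat \<Rightarrow> bool list \<Rightarrow> nat \<Rightarrow> bool list" where
  "honest_wires b C l c l' = eval_gates (b @ cert_choice l c l') (C l') []"

definition honest :: "bool list \<Rightarrow> (nat \<Rightarrow> gate list) \<Rightarrow> nat \<Rightarrow> bool list \<Rightarrow> nat \<Rightarrow> bool" where
  "honest b C l c q = (case prod_decode (q - 1) of (l', t) \<Rightarrow>
     if even t then l' = l \<and> t div 2 < l \<and> c ! (t div 2)
     else wire (honest_wires b C l c l') (t div 2))"

lemma honest_cert_par[simp]: "honest b C l c (cert_par l' i) \<longleftrightarrow> l' = l \<and> i < l \<and> c ! i"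
  by (simp add: honest_def cert_par_def)

lemma honest_gate_par[simp]: "honest b C l c (gate_par l' i) = wire (honest_wires b C l c l') i"
  by (simp add: honest_def gate_par_def)

lemma cert_of_honest: "length c = l \<Longrightarrow> cert_of (honest b C l c) l' = cert_choice l c l'"
  by (auto simp: cert_of_def cert_choice_def intro: nth_equalityI)

lemma length_honest_wires: "length (honest_wires b C l c l') = length (C l')"
  by (simp add: honest_wires_def length_eval_gates)

lemma gate_vals_honest:
  "i \<le> length (C l') \<Longrightarrow> gate_vals (honest b C l c) l' i = take i (honest_wires b C l c l')"
  by (auto simp: gate_vals_def wire_def length_honest_wires intro: nth_equalityI)

lemma honest_block_clauses:
  assumes "length b = n" "length c = l"
  shows "\<forall>cl\<in>set (block_clauses n C l'). clause_holds b (honest b C l c) cl"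
proof
  fix cl assume "cl \<in> set (block_clauses n C l')"
  then obtain i where i: "i < length (C l')" and cl: "cl \<in> set (gate_clauses n l' i (C l' ! i))"
    by (auto simp: block_clauses_def)
  have "honest b C l c (gate_par l' i) =
      gate_val (b @ cert_of (honest b C l c) l') (gate_vals (honest b C l c) l' i) (C l' ! i)"
    using i eval_gates_nth[OF i, of "b @ cert_choice l c l'"]
    by (simp add: cert_of_honest[OF assms(2)] gate_vals_honest wire_def length_honest_wires
        honest_wires_def length_eval_gates)
  then show "clause_holds b (honest b C l c) cl" using gate_clauses_iff[OF assms(1)] cl by blast
qed

lemma guess_check_complete:
  assumes "length b = n" "length c \<le> M" "circ_eval (C (length c)) (b @ c)"
  shows "accepts b (honest b C (length c) c) (guess_check n M C) False"
proof -
  let ?\<tau> = "honest b C (length c) c"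
  have "\<forall>ls. OClause ls \<in> set (guess_check n M C) \<longrightarrow> clause_holds b ?\<tau> ls"
    using honest_block_clauses[OF assms(1) refl] by (auto simp: guess_check_def block_def)
  moreover have "OOut (out_lit C (length c)) \<in> set (guess_check n M C)"
    using assms(2) by (force simp: guess_check_def block_def)
  moreover have "lit_holds b ?\<tau> (out_lit C (length c))"
    using assms(3)
    by (auto simp: out_lit_def honest_wires_def cert_choice_def circ_eval_def wire_def
        length_eval_gates last_conv_nth Let_def)
  ultimately show ?thesis using accepts_all_clauses by blast
qed

lemma guess_check_sound:
  assumes "length b = n" "accepts b \<tau> (guess_check n M C) False"
  shows "\<exists>l\<le>M. circ_eval (C l) (b @ cert_of \<tau> l)"
proof -
  obtain B where "B \<in> set (map (block n C) [0..<Suc M])" "accepts b \<tau> B False"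
    using accepts_concat[of b \<tau> "map (block n C) [0..<Suc M]"] assms(2)
    unfolding guess_check_def by blast
  then obtain l where "l < Suc M" "accepts b \<tau> (block n C l) False"
    by (auto simp del: upt_Suc)
  then show ?thesis using block_sound[OF assms(1)] less_Suc_eq_le by blast
qed

definition split_pars :: "op list \<Rightarrow> nat set" where
  "split_pars A = {p. OSplit p \<in> set A}"

lemma wf_ops_append: "wf_ops n D (A @ B) \<longleftrightarrow> wf_ops n D A \<and> wf_ops n (D \<union> split_pars A) B"
proof (induction A arbitrary: D)
  case (Cons op1 A)
  then show ?case
  proof (cases op1)
    case (OSplit p)
    have "insert p D \<union> split_pars A = D \<union> split_pars (op1 # A)"
      using OSplit by (auto simp: split_pars_def)
    then show ?thesis using OSplit Cons.IH by simp
  qed (auto simp: split_pars_def)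
qed (simp add: split_pars_def)

lemma wf_ops_splits: "wf_ops n D (map OSplit ps) \<longleftrightarrow> distinct ps \<and> set ps \<inter> D = {}"
  by (induction ps arbitrary: D) auto

lemma wf_ops_clauses_out:
  "wf_ops n D (map OClause cls @ [OOut l]) \<longleftrightarrow> (\<forall>cl\<in>set cls. \<forall>x\<in>set cl. wf_lit n D x) \<and> wf_lit n D l"
  by (induction cls) auto

lemma wf_lit_neg[simp]: "wf_lit n D (lit_neg l) = wf_lit n D l"
  by (cases l) auto

lemma wf_input_lit: "\<forall>i<l. cert_par l i \<in> D \<Longrightarrow> wf_lit n D (input_lit n l j)"
  by (auto simp: input_lit_def)

lemma wf_gate_lit: "\<forall>j<i. gate_par l j \<in> D \<Longrightarrow> wf_lit n D (gate_lit l i j)"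
  by (auto simp: gate_lit_def)

lemma wf_gate_clauses:
  "\<forall>i'<l. cert_par l i' \<in> D \<Longrightarrow> \<forall>j\<le>i. gate_par l j \<in> D \<Longrightarrow>
   cl \<in> set (gate_clauses n l i g) \<Longrightarrow> x \<in> set cl \<Longrightarrow> wf_lit n D x"
  by (cases g) (auto simp: Let_def wf_input_lit wf_gate_lit)

text \<open>Blocks use disjoint sets of fresh parameters, so the whole program is well formed.\<close>

lemma wf_block:
  assumes "set (block_pars C l) \<inter> D = {}"
  shows "wf_ops n D (block n C l)"
proof -
  let ?D = "D \<union> set (block_pars C l)"
  have split_pars: "split_pars (map OSplit (block_pars C l)) = set (block_pars C l)"
    by (auto simp: split_pars_def)
  have cert: "\<forall>i'<l. cert_par l i' \<in> ?D" and gates: "\<forall>j<length (C l). gate_par l j \<in> ?D"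
    by (auto simp: block_pars_def)
  have "\<forall>cl\<in>set (block_clauses n C l). \<forall>x\<in>set cl. wf_lit n ?D x"
  proof (intro ballI)
    fix cl x assume "cl \<in> set (block_clauses n C l)" "x \<in> set cl"
    moreover from this obtain i where "i < length (C l)" "cl \<in> set (gate_clauses n l i (C l ! i))"
      by (auto simp: block_clauses_def)
    ultimately show "wf_lit n ?D x"
      using wf_gate_clauses[OF cert, of i] gates by auto
  qed
  moreover have "wf_lit n ?D (out_lit C l)"
    by (auto simp: out_lit_def block_pars_def)
  moreover have "distinct (block_pars C l)"
    by (auto simp: block_pars_def distinct_map inj_on_def)
  ultimately have "wf_ops n ?D (map OClause (block_clauses n C l) @ [OOut (out_lit C l)])"
    "wf_ops n D (map OSplit (block_pars C l))"
    using assms unfolding wf_ops_clauses_out wf_ops_splits by blast+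
  then show ?thesis
    unfolding block_def using wf_ops_append[of n D "map OSplit (block_pars C l)"] split_pars by simp
qed

lemma wf_blocks:
  "distinct ls \<Longrightarrow> \<forall>l\<in>set ls. set (block_pars C l) \<inter> D = {} \<Longrightarrow> wf_ops n D (concat (map (block n C) ls))"
proof (induction ls arbitrary: D)
  case (Cons l ls)
  have disjoint: "set (block_pars C l') \<inter> set (block_pars C l) = {}" if "l' \<noteq> l" for l'
    using that by (auto simp: block_pars_def)
  have "split_pars (block n C l) = set (block_pars C l)"
    by (auto simp: split_pars_def block_def)
  moreover have "wf_ops n (D \<union> set (block_pars C l)) (concat (map (block n C) ls))"
  proof (rule Cons.IH)
    show "distinct ls" using Cons.prems by simp
    show "\<forall>l'\<in>set ls. set (block_pars C l') \<inter> (D \<union> set (block_pars C l)) = {}"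
      using Cons.prems disjoint by fastforce
  qed
  ultimately show ?case using Cons.prems wf_block[of C l D n] by (simp add: wf_ops_append)
qed simp

lemma wf_guess_check: "wf_ops n {} (guess_check n M C)"
  unfolding guess_check_def by (rule wf_blocks) auto

fun atom_ok :: "atom \<Rightarrow> bool" where
  "atom_ok (AIn j) \<longleftrightarrow> j \<ge> 1"
| "atom_ok (APar p) \<longleftrightarrow> p \<ge> 1"

fun lit_ok :: "lit \<Rightarrow> bool" where
  "lit_ok (LConst c) = True"
| "lit_ok (LAtom pol a) = atom_ok a"

fun op_ok :: "op \<Rightarrow> bool" where
  "op_ok (OSplit p) \<longleftrightarrow> p \<ge> 1"
| "op_ok (OClause ls) \<longleftrightarrow> (\<forall>l\<in>set ls. lit_ok l)"
| "op_ok (OOut l) \<longleftrightarrow> lit_ok l"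

lemma lit_code_ok:
  assumes "lit_ok l" "basic_of (lit_code l) = Some a" shows "basic_ok a"
  using assms by (cases l rule: lit_code.cases; cases "case l of LAtom pol at \<Rightarrow> at") auto

lemma clause_code_ok:
  "\<forall>l\<in>set ls. lit_ok l \<Longrightarrow> u \<in> set (clause_code ls) \<Longrightarrow> basic_of u = Some a \<Longrightarrow> basic_ok a"
  by (induction ls) (auto dest: lit_code_ok)

lemma op_code_ok: "op_ok o1 \<Longrightarrow> u \<in> set (op_code o1) \<Longrightarrow> basic_of u = Some a \<Longrightarrow> basic_ok a"
  by (cases o1) (auto dest: lit_code_ok clause_code_ok)

lemma prog_SIS_br: "\<forall>o1\<in>set ops. op_ok o1 \<Longrightarrow> prog ops \<in> SIS_br"
  by (auto simp: SIS_br_def prog_def dest: op_code_ok)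

lemma lit_ok_neg[simp]: "lit_ok (lit_neg l) = lit_ok l"
  by (cases l) auto

lemma guess_check_ok: "\<forall>o1\<in>set (guess_check n M C). op_ok o1"
proof -
  have lits: "lit_ok (input_lit n l j)" "lit_ok (gate_lit l i j)" for l i j
    by (auto simp: input_lit_def gate_lit_def cert_par_def gate_par_def)
  have clauses: "cl \<in> set (gate_clauses n l i g) \<Longrightarrow> x \<in> set cl \<Longrightarrow> lit_ok x"
    for cl x l i g
    by (cases g) (auto simp: Let_def gate_par_def lits)
  show ?thesis
    by (auto simp: guess_check_def block_def block_pars_def cert_par_def gate_par_def out_lit_def
        block_clauses_def dest: clauses)
qed

lemma length_op_code: "(\<forall>ls. o1 = OClause ls \<longrightarrow> length ls \<le> 3) \<Longrightarrow> length (op_code o1) \<le> 7"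
  by (cases o1) (auto simp: length_clause_code)

lemma length_prog:
  assumes "\<forall>ls. OClause ls \<in> set ops \<longrightarrow> length ls \<le> 3"
  shows "length (prog ops) \<le> 7 * length ops + 1"
proof -
  have "length (prog ops) = sum_list (map (\<lambda>o1. length (op_code o1)) ops) + 1"
    by (simp add: prog_def length_concat comp_def)
  also have "\<dots> \<le> sum_list (map (\<lambda>_. 7) ops) + 1"
    using assms by (intro add_right_mono sum_list_mono length_op_code) blast
  finally show ?thesis by (simp add: sum_list_triv)
qed

lemma gate_clauses_short: "cl \<in> set (gate_clauses n l i g) \<Longrightarrow> length cl \<le> 3"
  by (cases g) (auto simp: Let_def)

lemma length_gate_clauses: "length (gate_clauses n l i g) \<le> 3"
  by (cases g) (auto simp: Let_def)

lemma length_block: "length (block n C l) \<le> l + 4 * length (C l) + 1"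
proof -
  have "length (block_clauses n C l) = sum_list (map (\<lambda>i. length (gate_clauses n l i (C l ! i))) [0..<length (C l)])"
    by (simp add: block_clauses_def length_concat comp_def)
  also have "\<dots> \<le> sum_list (map (\<lambda>_. 3) [0..<length (C l)])"
    by (intro sum_list_mono length_gate_clauses)
  finally show ?thesis by (simp add: block_def block_pars_def sum_list_triv)
qed

lemma length_guess_check:
  assumes "\<forall>l\<le>M. length (C l) \<le> B"
  shows "length (prog (guess_check n M C)) \<le> 7 * (Suc M * (M + 4 * B + 1)) + 1"
proof -
  have "length (guess_check n M C) = sum_list (map (\<lambda>l. length (block n C l)) [0..<Suc M])"
    by (simp add: guess_check_def length_concat comp_def)
  also have "\<dots> \<le> sum_list (map (\<lambda>_. M + 4 * B + 1) [0..<Suc M])"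
  proof (intro sum_list_mono)
    fix l assume "l \<in> set [0..<Suc M]"
    then have "l \<le> M" by (simp del: upt_Suc)
    then show "length (block n C l) \<le> M + 4 * B + 1"
      using length_block[of n C l] assms by fastforce
  qed
  finally have "length (guess_check n M C) \<le> Suc M * (M + 4 * B + 1)"
    by (simp add: sum_list_triv del: upt_Suc)
  moreover have "\<forall>ls. OClause ls \<in> set (guess_check n M C) \<longrightarrow> length ls \<le> 3"
    by (auto simp: guess_check_def block_def block_clauses_def dest: gate_clauses_short)
  ultimately show ?thesis using length_prog by (meson add_le_mono1 le_trans mult_le_mono2)
qed

theorem guess_check_computes:
  "splitting_computes (prog (guess_check n M C)) n
     (\<lambda>b. \<exists>c. length c \<le> M \<and> circ_eval (C (length c)) (b @ c))"
  unfolding splitting_computes_def Let_def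
proof (intro allI impI conjI)
  fix b :: "bool list" assume b: "length b = n"
  let ?ops = "guess_check n M C"
  have run: "run (prog ?ops) b 1 Map.empty False = exec b ?ops Map.empty False"
    using run_prog by simp
  have wf: "wf_ops (length b) (dom Map.empty) ?ops"
    using wf_guess_check b by simp
  show "Deadlock \<notin> set (run (prog ?ops) b 1 Map.empty False)"
    unfolding run using exec_no_deadlock[OF wf] .
  have "Ok True \<in> set (run (prog ?ops) b 1 Map.empty False) \<longleftrightarrow> (\<exists>\<tau>. accepts b \<tau> ?ops False)"
    unfolding run exec_accepts[OF wf] by (simp add: extends_def)
  also have "\<dots> \<longleftrightarrow> (\<exists>c. length c \<le> M \<and> circ_eval (C (length c)) (b @ c))"
    using guess_check_complete[OF b] guess_check_sound[OF b] by (metis length_cert_of)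
  finally show "(\<exists>c. length c \<le> M \<and> circ_eval (C (length c)) (b @ c)) \<longleftrightarrow>
      Ok True \<in> set (run (prog ?ops) b 1 Map.empty False)" by simp
qed

text \<open>poly_growth bounds a function by a multiple of a power of n + 1.  It implies poly_bounded and
  is closed under sums, products and powers, which makes explicit size bounds easy to verify.\<close>

definition poly_growth :: "(nat \<Rightarrow> nat) \<Rightarrow> bool" where
  "poly_growth f \<longleftrightarrow> (\<exists>c d. \<forall>n. f n \<le> c * Suc n ^ d)"

lemma poly_bounded_if_growth:
  assumes "poly_growth f" shows "poly_bounded f"
proof -
  obtain c d where cd: "\<forall>n. f n \<le> c * Suc n ^ d" using assms by (auto simp: poly_growth_def)
  have suc_pow: "Suc n ^ d \<le> 2 ^ d * n ^ d + 2 ^ d" for n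
  proof (cases "n = 0")
    case False
    then have "Suc n ^ d \<le> (2 * n) ^ d" by (intro power_mono) auto
    then show ?thesis by (simp add: power_mult_distrib)
  qed (simp add: le_add2 order_trans[OF _ le_add2])
  have "f n \<le> (c * 2 ^ d) * n ^ d + c * 2 ^ d" for n
  proof -
    have "f n \<le> c * Suc n ^ d" using cd by blast
    also have "\<dots> \<le> c * (2 ^ d * n ^ d + 2 ^ d)" by (intro mult_le_mono2 suc_pow)
    finally show ?thesis by (simp add: algebra_simps)
  qed
  then show ?thesis unfolding poly_bounded_def by blast
qed

lemma poly_growth_const: "poly_growth (\<lambda>n. c)"
  unfolding poly_growth_def by (rule exI[of _ c], rule exI[of _ 0]) simp

lemma poly_growth_id: "poly_growth (\<lambda>n. n)"
  unfolding poly_growth_def by (rule exI[of _ 1], rule exI[of _ 1]) simp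

lemma poly_growth_add:
  assumes "poly_growth f" "poly_growth g" shows "poly_growth (\<lambda>n. f n + g n)"
proof -
  obtain c1 d1 c2 d2 where f: "\<forall>n. f n \<le> c1 * Suc n ^ d1" and g: "\<forall>n. g n \<le> c2 * Suc n ^ d2"
    using assms by (auto simp: poly_growth_def)
  have "f n + g n \<le> (c1 + c2) * Suc n ^ (d1 + d2)" for n
  proof -
    have mono: "Suc n ^ d1 \<le> Suc n ^ (d1 + d2)" "Suc n ^ d2 \<le> Suc n ^ (d1 + d2)"
      by (intro power_increasing; simp)+
    have "f n + g n \<le> c1 * Suc n ^ d1 + c2 * Suc n ^ d2" using f g by (simp add: add_mono)
    also have "\<dots> \<le> c1 * Suc n ^ (d1 + d2) + c2 * Suc n ^ (d1 + d2)"
      using mono by (intro add_mono mult_le_mono2)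
    finally show ?thesis by (simp add: algebra_simps)
  qed
  then show ?thesis unfolding poly_growth_def by blast
qed

lemma poly_growth_mult:
  assumes "poly_growth f" "poly_growth g" shows "poly_growth (\<lambda>n. f n * g n)"
proof -
  obtain c1 d1 c2 d2 where f: "\<forall>n. f n \<le> c1 * Suc n ^ d1" and g: "\<forall>n. g n \<le> c2 * Suc n ^ d2"
    using assms by (auto simp: poly_growth_def)
  have "f n * g n \<le> (c1 * c2) * Suc n ^ (d1 + d2)" for n
  proof -
    have "f n * g n \<le> (c1 * Suc n ^ d1) * (c2 * Suc n ^ d2)" using f g by (simp add: mult_le_mono)
    then show ?thesis by (simp add: algebra_simps power_add)
  qed
  then show ?thesis unfolding poly_growth_def by blast
qed

lemma poly_growth_pow:
  assumes "poly_growth f" shows "poly_growth (\<lambda>n. f n ^ k)"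
proof -
  obtain c d where f: "\<forall>n. f n \<le> c * Suc n ^ d" using assms by (auto simp: poly_growth_def)
  have "f n ^ k \<le> c ^ k * Suc n ^ (d * k)" for n
  proof -
    have "f n ^ k \<le> (c * Suc n ^ d) ^ k" using f by (simp add: power_mono)
    then show ?thesis by (simp add: power_mult_distrib power_mult)
  qed
  then show ?thesis unfolding poly_growth_def by blast
qed

lemmas poly_growth_intros =
  poly_growth_const poly_growth_id poly_growth_add poly_growth_mult poly_growth_pow

lemma Ppoly2_circuits:
  assumes "Ppoly2 g"
  obtains a e and C :: "nat \<Rightarrow> nat \<Rightarrow> gate list" where
    "\<And>n m. length (C n m) \<le> a * (n + m) ^ e + a"
    "\<And>n m w c. length w = n \<Longrightarrow> length c = m \<Longrightarrow> circ_eval (C n m) (w @ c) = g w c"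
proof -
  obtain h where h: "poly_bounded h" and circuits: "\<forall>n m. \<exists>C. length C \<le> h (n + m) \<and>
      (\<forall>w c. length w = n \<longrightarrow> length c = m \<longrightarrow> circ_eval C (w @ c) = g w c)"
    using assms by (auto simp: Ppoly2_def)
  obtain a e where "\<forall>N. h N \<le> a * N ^ e + a" using h by (auto simp: poly_bounded_def)
  moreover obtain C where "\<forall>n m. length (C n m) \<le> h (n + m) \<and>
      (\<forall>w c. length w = n \<longrightarrow> length c = m \<longrightarrow> circ_eval (C n m) (w @ c) = g w c)"
    using circuits by metis
  ultimately show ?thesis using that[of C a e] by (meson le_trans)
qed

lemma splitting_computes_cong:
  "splitting_computes X n F \<Longrightarrow> (\<And>b. length b = n \<Longrightarrow> F b = G b) \<Longrightarrow> splitting_computes X n G"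
  by (simp add: splitting_computes_def)

theorem NPpoly_subset_P_lsis:
  assumes "L \<in> NPpoly" shows "L \<in> lang_of ` P_lsis"
proof -
  obtain k g where g: "Ppoly2 g" and L: "\<And>w. w \<in> L \<longleftrightarrow> (\<exists>c. length c \<le> length w ^ k \<and> g w c)"
    using assms by (auto simp: NPpoly_def)
  obtain a e C where size: "\<And>n m. length (C n m) \<le> a * (n + m) ^ e + a"
    and C: "\<And>n m w c. length w = n \<Longrightarrow> length c = m \<Longrightarrow> circ_eval (C n m) (w @ c) = g w c"
    using Ppoly2_circuits[OF g] by metis
  define f where "f n w \<longleftrightarrow> w \<in> L" for n :: nat and w
  define X where "X n = prog (guess_check n (n ^ k) (C n))" for n
  define H where "H n = 7 * ((n ^ k + 1) * (n ^ k + 4 * (a * (n + n ^ k) ^ e + a) + 1)) + 1" for n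
  have circuit_size: "\<forall>l\<le>n ^ k. length (C n l) \<le> a * (n + n ^ k) ^ e + a" for n
  proof (intro allI impI)
    fix l assume "l \<le> n ^ k"
    have "a * (n + l) ^ e \<le> a * (n + n ^ k) ^ e"
      using \<open>l \<le> n ^ k\<close> by (intro mult_le_mono2 power_mono) auto
    then show "length (C n l) \<le> a * (n + n ^ k) ^ e + a" using size[of n l] by linarith
  qed
  have "length (X n) \<le> H n" for n
    unfolding X_def H_def using length_guess_check[OF circuit_size, of n] by simp
  moreover have "splitting_computes (X n) n (f n)" for n
    unfolding X_def by (rule splitting_computes_cong[OF guess_check_computes]) (simp add: f_def L C)
  moreover have "poly_bounded H"
    unfolding H_def by (intro poly_bounded_if_growth poly_growth_intros)
  moreover have "X n \<in> SIS_br" for n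
    unfolding X_def by (rule prog_SIS_br[OF guess_check_ok])
  ultimately have "f \<in> P_lsis" unfolding P_lsis_def by blast
  moreover have "lang_of f = L" by (simp add: lang_of_def f_def)
  ultimately show ?thesis by blast
qed

section \<open>P*_lsis is contained in NP/poly\<close>

text \<open>A total assignment tau of the parameters determines a deterministic step function dstep on
  positions: split(p) and reply(p) both answer tau p.\<close>

fun dreply :: "bool list \<Rightarrow> (nat \<Rightarrow> bool) \<Rightarrow> basic \<Rightarrow> bool option" where
  "dreply b \<tau> (InGet j) = (if 1 \<le> j \<and> j \<le> length b then Some (b ! (j - 1)) else None)"
| "dreply b \<tau> OutSetT = Some True"
| "dreply b \<tau> (Split p) = Some (\<tau> p)"
| "dreply b \<tau> (Reply p) = Some (\<tau> p)"

definition dstep :: "prim list \<Rightarrow> bool list \<Rightarrow> (nat \<Rightarrow> bool) \<Rightarrow> nat \<Rightarrow> nat option" where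
  "dstep X b \<tau> i = (if i = 0 \<or> length X < i then None else
     (case X ! (i - 1) of
        Term \<Rightarrow> None
      | FJmp l \<Rightarrow> (if l = 0 then None else Some (i + l))
      | u \<Rightarrow> map_option (next_pc u i) (dreply b \<tau> (the (basic_of u)))))"

definition isout :: "prim list \<Rightarrow> nat \<Rightarrow> bool" where
  "isout X i \<longleftrightarrow> 1 \<le> i \<and> i \<le> length X \<and> basic_of (X ! (i - 1)) = Some OutSetT"

abbreviation reach :: "prim list \<Rightarrow> bool list \<Rightarrow> (nat \<Rightarrow> bool) \<Rightarrow> nat \<Rightarrow> nat \<Rightarrow> bool" where
  "reach X b \<tau> \<equiv> (\<lambda>i j. dstep X b \<tau> i = Some j)\<^sup>*\<^sup>*"

lemma reach_first: "reach X b \<tau> i j \<Longrightarrow> j = i \<or> (\<exists>s. dstep X b \<tau> i = Some s \<and> reach X b \<tau> s j)"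
  by (induction rule: converse_rtranclp_induct) auto

definition branches ::
  "bool list \<Rightarrow> (nat \<Rightarrow> bool option) \<Rightarrow> basic \<Rightarrow> (bool \<times> (nat \<Rightarrow> bool option)) list option" where
  "branches b \<sigma> a = (case a of
      Split p \<Rightarrow> (case \<sigma> p of None \<Rightarrow> Some [(True, \<sigma>(p \<mapsto> True)), (False, \<sigma>(p \<mapsto> False))]
                           | Some _ \<Rightarrow> None)
    | _ \<Rightarrow> map_option (\<lambda>r. [(r, \<sigma>)]) (basic_reply b \<sigma> a))"

lemma branches_sound:
  assumes "branches b \<sigma> a = Some bs" "(r, \<sigma>') \<in> set bs" "extends \<sigma>' \<tau>"
  shows "extends \<sigma> \<tau> \<and> dreply b \<tau> a = Some r"
proof (cases "\<exists>p. a = Split p")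
  case True
  then obtain p where "a = Split p" by blast
  then show ?thesis using assms by (auto simp: branches_def extends_upd split: option.splits)
next
  case False
  then show ?thesis using assms by (cases a) (auto simp: branches_def extends_def split: if_splits)
qed

lemma branches_complete:
  assumes "branches b \<sigma> a = Some bs" "extends \<sigma> \<tau>"
  shows "\<exists>r \<sigma>'. (r, \<sigma>') \<in> set bs \<and> extends \<sigma>' \<tau> \<and> dreply b \<tau> a = Some r"
proof (cases "\<exists>p. a = Split p")
  case True
  then obtain p where "a = Split p" by blast
  then have "(\<tau> p, \<sigma>(p \<mapsto> \<tau> p)) \<in> set bs" "extends (\<sigma>(p \<mapsto> \<tau> p)) \<tau>" "dreply b \<tau> a = Some (\<tau> p)"
    using assms by (cases "\<tau> p"; auto simp: branches_def extends_upd split: option.splits)+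
  then show ?thesis by blast
next
  case False
  then show ?thesis using assms by (cases a) (auto simp: branches_def extends_def split: if_splits)
qed

lemma run_Term: "i < length X \<Longrightarrow> X ! i = Term \<Longrightarrow> run X b (Suc i) \<sigma> fl = [Ok fl]"
  by (subst run.simps) simp

lemma run_FJmp: "i < length X \<Longrightarrow> X ! i = FJmp l \<Longrightarrow>
   run X b (Suc i) \<sigma> fl = (if l = 0 then [Deadlock] else run X b (Suc i + l) \<sigma> fl)"
  by (subst run.simps) simp

lemma run_basic:
  "i < length X \<Longrightarrow> basic_of (X ! i) = Some a \<Longrightarrow>
   run X b (Suc i) \<sigma> fl = (case branches b \<sigma> a of None \<Rightarrow> [Deadlock]
     | Some bs \<Rightarrow> concat (map (\<lambda>(r, \<sigma>'). run X b (next_pc (X ! i) (Suc i) r) \<sigma>' (fl \<or> a = OutSetT)) bs))"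
  by (subst run.simps, cases "X ! i"; cases a) (auto simp: branches_def split: option.split)

lemma dstep_FJmp: "i < length X \<Longrightarrow> X ! i = FJmp l \<Longrightarrow> l \<noteq> 0 \<Longrightarrow> dstep X b \<tau> (Suc i) = Some (Suc i + l)"
  by (simp add: dstep_def)

lemma dstep_basic: "i < length X \<Longrightarrow> basic_of (X ! i) = Some a \<Longrightarrow> dreply b \<tau> a = Some r \<Longrightarrow>
   dstep X b \<tau> (Suc i) = Some (next_pc (X ! i) (Suc i) r)"
  by (cases "X ! i") (auto simp: dstep_def)

lemma isout_basic: "i < length X \<Longrightarrow> basic_of (X ! i) = Some a \<Longrightarrow> isout X (Suc i) \<longleftrightarrow> a = OutSetT"
  by (simp add: isout_def)

lemma instr_cases:
  obtains "X ! i = Term" | l where "X ! i = FJmp l" | a where "basic_of (X ! i) = Some a"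
  by (cases "X ! i") auto

text \<open>The splitting execution outputs T on some branch iff some total assignment reaches an
  out.set:T instruction; for the direction from reachability to an accepting branch the execution
  must be free of deadlocks, as it is for the programs in the statement.\<close>

lemma run_sound:
  "Ok True \<in> set (run X b pc \<sigma> fl) \<Longrightarrow> \<exists>\<tau>. extends \<sigma> \<tau> \<and> (fl \<or> (\<exists>j. reach X b \<tau> pc j \<and> isout X j))"
proof (induction "Suc (length X) - pc" arbitrary: pc \<sigma> fl rule: less_induct)
  case less
  obtain i where pc: "pc = Suc i" "i < length X"
    using less.prems run_out_of_range[of pc X] by (cases pc) fastforce+
  have IH: "\<exists>\<tau>. extends \<sigma>' \<tau> \<and> (fl' \<or> (\<exists>j. reach X b \<tau> pc' j \<and> isout X j))"
    if "pc < pc'" "Ok True \<in> set (run X b pc' \<sigma>' fl')" for pc' \<sigma>' fl'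
    using less.hyps[OF _ that(2)] that(1) pc by simp
  show ?case
  proof (cases rule: instr_cases[of X i])
    case 1
    then show ?thesis using less.prems pc run_Term extends_default_ext by fastforce
  next
    case (2 l)
    then have "l \<noteq> 0" and run: "run X b pc \<sigma> fl = run X b (pc + l) \<sigma> fl"
      using less.prems pc run_FJmp[of i X l] by (auto split: if_splits)
    have "\<exists>\<tau>. extends \<sigma> \<tau> \<and> (fl \<or> (\<exists>j. reach X b \<tau> (pc + l) j \<and> isout X j))"
      using IH[of "pc + l" \<sigma> fl] \<open>l \<noteq> 0\<close> run less.prems by simp
    then obtain \<tau> where "extends \<sigma> \<tau>" "fl \<or> (\<exists>j. reach X b \<tau> (pc + l) j \<and> isout X j)"
      by blast
    moreover have "dstep X b \<tau> pc = Some (pc + l)" using dstep_FJmp[OF pc(2) 2 \<open>l \<noteq> 0\<close>] pc by simp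
    ultimately show ?thesis by (meson converse_rtranclp_into_rtranclp)
  next
    case (3 a)
    let ?next = "\<lambda>r. next_pc (X ! i) pc r"
    obtain bs where bs: "branches b \<sigma> a = Some bs"
      using less.prems run_basic[OF pc(2) 3] pc by (auto split: option.splits)
    then obtain r \<sigma>' where br: "(r, \<sigma>') \<in> set bs"
      and ok: "Ok True \<in> set (run X b (?next r) \<sigma>' (fl \<or> a = OutSetT))"
      using less.prems run_basic[OF pc(2) 3] pc by auto
    obtain \<tau> where \<tau>: "extends \<sigma>' \<tau>" "fl \<or> a = OutSetT \<or> (\<exists>j. reach X b \<tau> (?next r) j \<and> isout X j)"
      using IH[OF next_pc_gt ok] by blast
    have "extends \<sigma> \<tau>" "dstep X b \<tau> pc = Some (?next r)"
      using branches_sound[OF bs br \<tau>(1)] dstep_basic[OF pc(2) 3] pc by auto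
    then show ?thesis
      using \<tau>(2) isout_basic[OF pc(2) 3] pc by (meson converse_rtranclp_into_rtranclp rtranclp.rtrancl_refl)
  qed
qed

lemma run_complete:
  "Deadlock \<notin> set (run X b pc \<sigma> fl) \<Longrightarrow> extends \<sigma> \<tau> \<Longrightarrow> fl \<or> (\<exists>j. reach X b \<tau> pc j \<and> isout X j) \<Longrightarrow>
   Ok True \<in> set (run X b pc \<sigma> fl)"
proof (induction "Suc (length X) - pc" arbitrary: pc \<sigma> fl rule: less_induct)
  case less
  obtain i where pc: "pc = Suc i" "i < length X"
    using less.prems(1) run_out_of_range[of pc X] by (cases pc) fastforce+
  have IH: "Ok True \<in> set (run X b pc' \<sigma>' fl')"
    if "pc < pc'" "Deadlock \<notin> set (run X b pc' \<sigma>' fl')" "extends \<sigma>' \<tau>"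
      "fl' \<or> (\<exists>j. reach X b \<tau> pc' j \<and> isout X j)" for pc' \<sigma>' fl'
    using less.hyps[OF _ that(2-4)] that(1) pc by simp
  have cases: "fl \<or> isout X pc \<or> (\<exists>s j. dstep X b \<tau> pc = Some s \<and> reach X b \<tau> s j \<and> isout X j)"
    using less.prems(3) reach_first by metis
  show ?case
  proof (cases rule: instr_cases[of X i])
    case 1
    then show ?thesis using cases pc run_Term by (auto simp: isout_def dstep_def)
  next
    case (2 l)
    then have "l \<noteq> 0" and run: "run X b pc \<sigma> fl = run X b (pc + l) \<sigma> fl"
      using less.prems(1) pc run_FJmp[of i X l] by (auto split: if_splits)
    have "dstep X b \<tau> pc = Some (pc + l)" using dstep_FJmp[OF pc(2) 2 \<open>l \<noteq> 0\<close>] pc by simp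
    then show ?thesis
      using IH[of "pc + l" \<sigma> fl] \<open>l \<noteq> 0\<close> run cases less.prems(1,2) 2 pc by (auto simp: isout_def)
  next
    case (3 a)
    let ?next = "\<lambda>r. next_pc (X ! i) pc r"
    obtain bs where bs: "branches b \<sigma> a = Some bs"
      using less.prems(1) run_basic[OF pc(2) 3] pc by (auto split: option.splits)
    then obtain r \<sigma>' where br: "(r, \<sigma>') \<in> set bs" "extends \<sigma>' \<tau>" and reply: "dreply b \<tau> a = Some r"
      using branches_complete less.prems(2) by blast
    have run: "set (run X b (?next r) \<sigma>' (fl \<or> a = OutSetT)) \<subseteq> set (run X b pc \<sigma> fl)"
      using run_basic[OF pc(2) 3] bs br(1) pc by auto
    have "dstep X b \<tau> pc = Some (?next r)" using dstep_basic[OF pc(2) 3 reply] pc by simp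
    then have "(fl \<or> a = OutSetT) \<or> (\<exists>j. reach X b \<tau> (?next r) j \<and> isout X j)"
      using cases isout_basic[OF pc(2) 3] pc by auto
    then show ?thesis using IH[OF next_pc_gt _ br(2)] run less.prems(1) by blast
  qed
qed

datatype form = FV nat | FC bool | FN form | FA form form

fun feval :: "bool list \<Rightarrow> form \<Rightarrow> bool" where
  "feval x (FV i) = wire x i"
| "feval x (FC c) = c"
| "feval x (FN f) = (\<not> feval x f)"
| "feval x (FA f g) = (feval x f \<and> feval x g)"

fun fsize :: "form \<Rightarrow> nat" where
  "fsize (FV i) = 1"
| "fsize (FC c) = 1"
| "fsize (FN f) = fsize f + 1"
| "fsize (FA f g) = fsize f + fsize g + 1"

text \<open>Disjunction is derived, so that the compiler only handles negation and conjunction.\<close>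

definition FOr :: "form \<Rightarrow> form \<Rightarrow> form" where
  "FOr f g = FN (FA (FN f) (FN g))"

lemma feval_FOr[simp]: "feval x (FOr f g) = (feval x f \<or> feval x g)"
  by (simp add: FOr_def)

lemma fsize_FOr[simp]: "fsize (FOr f g) = fsize f + fsize g + 4"
  by (simp add: FOr_def)

text \<open>Compilation of a formula into a straight-line circuit whose gates start at wire o1; the output
  is the last gate.\<close>

fun fcompile :: "nat \<Rightarrow> form \<Rightarrow> gate list" where
  "fcompile o1 (FV i) = [GIn i]"
| "fcompile o1 (FC c) = [GConst c]"
| "fcompile o1 (FN f) = fcompile o1 f @ [GNot (o1 + fsize f - 1)]"
| "fcompile o1 (FA f g) =
     fcompile o1 f @ fcompile (o1 + fsize f) g @ [GAnd (o1 + fsize f - 1) (o1 + fsize f + fsize g - 1)]"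

lemma length_fcompile: "length (fcompile o1 f) = fsize f"
  by (induction o1 f rule: fcompile.induct) auto

lemma wire_last: "ws \<noteq> [] \<Longrightarrow> wire (vs @ ws @ zs) (length vs + length ws - 1) = last ws"
  by (cases ws rule: rev_cases) (auto simp: wire_def nth_append)

lemma fcompile_correct:
  "length vs = o1 \<Longrightarrow> \<exists>ws. eval_gates x (fcompile o1 f) vs = vs @ ws \<and> length ws = fsize f \<and>
     ws \<noteq> [] \<and> last ws = feval x f"
proof (induction o1 f arbitrary: vs rule: fcompile.induct)
  case (3 o1 f)
  obtain ws where ws: "eval_gates x (fcompile o1 f) vs = vs @ ws" "length ws = fsize f" "ws \<noteq> []"
    "last ws = feval x f"
    using "3.IH"[OF "3.prems"] by blast
  have "wire (vs @ ws) (o1 + fsize f - 1) = feval x f"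
    using wire_last[OF ws(3), of vs "[]"] ws "3.prems" by simp
  then show ?case using ws by (auto simp: eval_gates_append)
next
  case (4 o1 f g)
  obtain ws where ws: "eval_gates x (fcompile o1 f) vs = vs @ ws" "length ws = fsize f" "ws \<noteq> []"
    "last ws = feval x f"
    using "4.IH"(1)[OF "4.prems"] by blast
  obtain us where us: "eval_gates x (fcompile (o1 + fsize f) g) (vs @ ws) = (vs @ ws) @ us"
    "length us = fsize g" "us \<noteq> []" "last us = feval x g"
    using "4.IH"(2)[of "vs @ ws"] "4.prems" ws by auto
  have "wire (vs @ ws @ us) (o1 + fsize f - 1) = feval x f"
    using wire_last[OF ws(3), of vs us] ws "4.prems" by simp
  moreover have "wire (vs @ ws @ us) (o1 + fsize f + fsize g - 1) = feval x g"
    using wire_last[OF us(3), of "vs @ ws" "[]"] ws us "4.prems" by simp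
  ultimately show ?case using ws us by (auto simp: eval_gates_append)
qed (auto simp: wire_def)

lemma circ_eval_fcompile: "circ_eval (fcompile 0 f) x = feval x f"
  using fcompile_correct[of "[]" 0 x f] by (auto simp: circ_eval_def)

fun Ors :: "form list \<Rightarrow> form" where
  "Ors [] = FC False"
| "Ors (f # fs) = FOr f (Ors fs)"

fun Ands :: "form list \<Rightarrow> form" where
  "Ands [] = FC True"
| "Ands (f # fs) = FA f (Ands fs)"

lemma feval_Ors[simp]: "feval x (Ors fs) = (\<exists>f\<in>set fs. feval x f)"
  by (induction fs) auto

lemma feval_Ands[simp]: "feval x (Ands fs) = (\<forall>f\<in>set fs. feval x f)"
  by (induction fs) auto

lemma fsize_Ors: "\<forall>x\<in>set xs. fsize (F x) \<le> B \<Longrightarrow> fsize (Ors (map F xs)) \<le> (B + 4) * length xs + 1"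
  by (induction xs) auto

lemma fsize_Ands: "\<forall>x\<in>set xs. fsize (F x) \<le> B \<Longrightarrow> fsize (Ands (map F xs)) \<le> (B + 1) * length xs + 1"
  by (induction xs) auto

text \<open>Every Boolean function on B^n has a formula (by Shannon expansion on the last variable); it is
  needed only for n at most 1, where certificates must be (almost) empty.\<close>

fun shannon :: "(bool list \<Rightarrow> bool) \<Rightarrow> nat \<Rightarrow> form" where
  "shannon F 0 = FC (F [])"
| "shannon F (Suc n) = FOr (FA (FV n) (shannon (\<lambda>w. F (w @ [True])) n))
                           (FA (FN (FV n)) (shannon (\<lambda>w. F (w @ [False])) n))"

lemma feval_shannon: "length w = n \<Longrightarrow> feval (w @ c) (shannon F n) = F w"
proof (induction n arbitrary: F w c)
  case (Suc n)
  then obtain v x where w: "w = v @ [x]" and v: "length v = n"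
    by (cases w rule: rev_cases) auto
  have "wire (w @ c) n = x" using w v by (simp add: wire_def nth_append)
  then show ?case using Suc.IH[OF v, where c = "x # c"] w by (cases x) auto
qed simp

lemma fsize_shannon: "fsize (shannon F n) \<le> 11 ^ n"
proof (induction n arbitrary: F)
  case (Suc n)
  have "fsize (shannon F (Suc n)) \<le> 2 * 11 ^ n + 9"
    using Suc.IH[of "\<lambda>w. F (w @ [True])"] Suc.IH[of "\<lambda>w. F (w @ [False])"] by simp
  also have "\<dots> \<le> 11 ^ Suc n" using one_le_power[of 11 n] by simp
  finally show ?case .
qed simp

lemma formula_family_Ppoly2:
  assumes "poly_bounded h" "mono h" "\<And>n. fsize (\<Phi> n) \<le> h n"
  shows "Ppoly2 (\<lambda>w c. feval (w @ c) (\<Phi> (length w)))"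
  unfolding Ppoly2_def
proof (rule exI[of _ h], intro conjI allI)
  fix n m
  have "length (fcompile 0 (\<Phi> n)) \<le> h (n + m)"
    using assms(3)[of n] monoD[OF assms(2), of n "n + m"] by (simp add: length_fcompile)
  then show "\<exists>C. length C \<le> h (n + m) \<and> (\<forall>w c. length w = n \<longrightarrow> length c = m \<longrightarrow>
      circ_eval C (w @ c) = feval (w @ c) (\<Phi> (length w)))"
    by (auto simp: circ_eval_fcompile)
qed (rule assms(1))

text \<open>For fixed X and n the certificate c consists of the values of the parameters occurring in X
  (in the order of params X) followed by one bit per position of X saying whether it is reached.
  cert_formula n X, evaluated on w @ c, checks that every claimed reached position other than 1 has a
  claimed reached predecessor that steps to it, and that some claimed reached position holds
  out.set:T.\<close>

fun param_of :: "prim \<Rightarrow> nat list" where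
  "param_of u = (case basic_of u of Some (Split p) \<Rightarrow> [p] | Some (Reply p) \<Rightarrow> [p] | _ \<Rightarrow> [])"

definition params :: "prim list \<Rightarrow> nat list" where
  "params X = concat (map param_of X)"

fun param_pos :: "nat list \<Rightarrow> nat \<Rightarrow> nat" where
  "param_pos [] p = 0"
| "param_pos (q # qs) p = (if q = p then 0 else Suc (param_pos qs p))"

lemma param_pos: "p \<in> set ps \<Longrightarrow> param_pos ps p < length ps \<and> ps ! param_pos ps p = p"
  by (induction ps) auto

lemma length_params: "length (params X) \<le> length X"
proof -
  have "length (param_of u) \<le> 1" for u by (auto split: option.split basic.split)
  then have "sum_list (map (length \<circ> param_of) X) \<le> sum_list (map (\<lambda>_. 1) X)"
    by (intro sum_list_mono) simp
  then show ?thesis by (simp add: params_def length_concat sum_list_triv)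
qed

definition cert_assignment :: "nat \<Rightarrow> prim list \<Rightarrow> bool list \<Rightarrow> nat \<Rightarrow> bool" where
  "cert_assignment n X x p = wire x (n + param_pos (params X) p)"

fun reply_lit :: "nat \<Rightarrow> prim list \<Rightarrow> basic \<Rightarrow> form option" where
  "reply_lit n X (InGet j) = (if 1 \<le> j \<and> j \<le> n then Some (FV (j - 1)) else None)"
| "reply_lit n X OutSetT = Some (FC True)"
| "reply_lit n X (Split p) = Some (FV (n + param_pos (params X) p))"
| "reply_lit n X (Reply p) = Some (FV (n + param_pos (params X) p))"

definition step_formula :: "nat \<Rightarrow> prim list \<Rightarrow> nat \<Rightarrow> nat \<Rightarrow> form" where
  "step_formula n X i j = (if i = 0 \<or> length X < i then FC False else
     (case X ! (i - 1) of
        Term \<Rightarrow> FC False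
      | FJmp l \<Rightarrow> FC (l \<noteq> 0 \<and> i + l = j)
      | u \<Rightarrow> (case reply_lit n X (the (basic_of u)) of
               None \<Rightarrow> FC False
             | Some L \<Rightarrow> FOr (FA L (FC (next_pc u i True = j))) (FA (FN L) (FC (next_pc u i False = j))))))"

lemma reply_lit_sem:
  "length w = n \<Longrightarrow>
   map_option (feval (w @ c)) (reply_lit n X a) = dreply w (cert_assignment n X (w @ c)) a"
  by (cases a) (auto simp: cert_assignment_def wire_def nth_append)

lemma step_formula_sem:
  assumes "length w = n"
  shows "feval (w @ c) (step_formula n X i j) \<longleftrightarrow> dstep X w (cert_assignment n X (w @ c)) i = Some j"
proof (cases "i = 0 \<or> length X < i")
  case False
  then obtain i' where i': "i = Suc i'" "i' < length X" by (cases i) auto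
  show ?thesis
  proof (cases rule: instr_cases[of X i'])
    case (3 a)
    have step: "step_formula n X i j = (case reply_lit n X a of None \<Rightarrow> FC False
        | Some L \<Rightarrow> FOr (FA L (FC (next_pc (X ! i') i True = j)))
                        (FA (FN L) (FC (next_pc (X ! i') i False = j))))"
      using i' 3 by (cases "X ! i'") (auto simp: step_formula_def split: option.split)
    have dstep: "dstep X w (cert_assignment n X (w @ c)) i =
        map_option (next_pc (X ! i') i) (dreply w (cert_assignment n X (w @ c)) a)"
      using i' 3 by (cases "X ! i'") (auto simp: dstep_def split: option.split)
    show ?thesis
    proof (cases "reply_lit n X a")
      case (Some L)
      then show ?thesis
        unfolding step dstep reply_lit_sem[OF assms, symmetric] by (cases "feval (w @ c) L") auto
    qed (simp add: step dstep reply_lit_sem[OF assms, symmetric])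
  qed (use i' in \<open>auto simp: step_formula_def dstep_def\<close>)
qed (auto simp: step_formula_def dstep_def)

definition visited :: "nat \<Rightarrow> prim list \<Rightarrow> nat \<Rightarrow> form" where
  "visited n X j = FV (n + length (params X) + (j - 1))"

definition cert_formula :: "nat \<Rightarrow> prim list \<Rightarrow> form" where
  "cert_formula n X = FA
     (Ands (map (\<lambda>j. FOr (FN (visited n X j)) (FOr (FC (j = 1))
        (Ors (map (\<lambda>i. FA (visited n X i) (step_formula n X i j)) [1..<j])))) [1..<Suc (length X)]))
     (Ors (map (\<lambda>i. FA (visited n X i) (FC (isout X i))) [1..<Suc (length X)]))"

lemma cert_formula_sem:
  "length w = n \<Longrightarrow> feval (w @ c) (cert_formula n X) \<longleftrightarrow>
    (\<forall>j\<in>{1..length X}. feval (w @ c) (visited n X j) \<longrightarrow> j = 1 \<or>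
      (\<exists>i\<in>{1..<j}. feval (w @ c) (visited n X i) \<and> dstep X w (cert_assignment n X (w @ c)) i = Some j)) \<and>
    (\<exists>i\<in>{1..length X}. feval (w @ c) (visited n X i) \<and> isout X i)"
  by (simp add: cert_formula_def step_formula_sem atLeastLessThanSuc_atLeastAtMost del: upt_Suc)

lemma dstep_lt: "dstep X b \<tau> i = Some j \<Longrightarrow> 1 \<le> i \<and> i \<le> length X \<and> i < j"
  unfolding dstep_def by (auto simp: next_pc_gt split: if_splits prim.splits)

lemma dstep_cong: "\<forall>p\<in>set (params X). \<tau> p = \<tau>' p \<Longrightarrow> dstep X b \<tau> i = dstep X b \<tau>' i"
proof (cases "i = 0 \<or> length X < i")
  case False
  assume agree: "\<forall>p\<in>set (params X). \<tau> p = \<tau>' p"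
  have "X ! (i - 1) \<in> set X" using False by auto
  then have "set (param_of (X ! (i - 1))) \<subseteq> set (params X)"
    by (auto simp: params_def)
  then have "dreply b \<tau> a = dreply b \<tau>' a" if "basic_of (X ! (i - 1)) = Some a" for a
    using that agree by (cases a) auto
  then show ?thesis unfolding dstep_def by (cases "X ! (i - 1)") auto
qed (simp add: dstep_def)

lemma chain_reach:
  assumes "\<forall>j\<in>{1..K}. v j \<longrightarrow> j = 1 \<or> (\<exists>i\<in>{1..<j}. v i \<and> dstep X b \<tau> i = Some j)"
  shows "1 \<le> j \<Longrightarrow> j \<le> K \<Longrightarrow> v j \<Longrightarrow> reach X b \<tau> 1 j"
proof (induction j rule: less_induct)
  case (less j)
  show ?case
  proof (cases "j = 1")
    case False
    then obtain i where "i \<in> {1..<j}" "v i" "dstep X b \<tau> i = Some j"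
      using assms less.prems by auto
    then show ?thesis using less.IH[of i] less.prems by (auto intro: rtranclp.rtrancl_into_rtrancl)
  qed simp
qed

lemma cert_formula_sound:
  assumes "length w = n" "feval (w @ c) (cert_formula n X)"
  shows "\<exists>i. reach X w (cert_assignment n X (w @ c)) 1 i \<and> isout X i"
proof -
  note sem = assms(2)[unfolded cert_formula_sem[OF assms(1)]]
  then obtain i where "i \<in> {1..length X}" "feval (w @ c) (visited n X i)" "isout X i"
    by blast
  then show ?thesis using chain_reach[OF conjunct1[OF sem]] by auto
qed

definition certificate :: "prim list \<Rightarrow> bool list \<Rightarrow> (nat \<Rightarrow> bool) \<Rightarrow> bool list" where
  "certificate X w \<tau> = map \<tau> (params X) @ map (\<lambda>j. reach X w \<tau> 1 j) [1..<Suc (length X)]"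

lemma length_certificate: "length (certificate X w \<tau>) = length (params X) + length X"
  by (simp add: certificate_def del: upt_Suc)

lemma certificate_assignment:
  assumes "length w = n" "p \<in> set (params X)"
  shows "cert_assignment n X (w @ certificate X w \<tau>) p = \<tau> p"
  using param_pos[OF assms(2)] assms(1)
  by (simp add: cert_assignment_def wire_def nth_append certificate_def length_certificate)

lemma certificate_visited:
  assumes "length w = n" "1 \<le> j" "j \<le> length X"
  shows "feval (w @ certificate X w \<tau>) (visited n X j) = reach X w \<tau> 1 j"
proof -
  let ?P = "length (params X)"
  have "(w @ certificate X w \<tau>) ! (n + ?P + (j - 1)) = certificate X w \<tau> ! (?P + (j - 1))"
    using assms(1) by (metis add.assoc nth_append_length_plus)
  also have "\<dots> = map (\<lambda>j. reach X w \<tau> 1 j) [1..<Suc (length X)] ! (j - 1)"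
    unfolding certificate_def using nth_append_length_plus[of "map \<tau> (params X)"] by simp
  also have "\<dots> = reach X w \<tau> 1 j"
    using assms(2,3) by (simp del: upt_Suc)
  finally have "(w @ certificate X w \<tau>) ! (n + ?P + (j - 1)) = reach X w \<tau> 1 j" .
  moreover have "n + ?P + (j - 1) < length (w @ certificate X w \<tau>)"
    using assms by (simp add: length_certificate)
  ultimately show ?thesis unfolding visited_def feval.simps wire_def by blast
qed

lemma cert_formula_complete:
  assumes w: "length w = n" and "reach X w \<tau> 1 i0" "isout X i0"
  shows "feval (w @ certificate X w \<tau>) (cert_formula n X)"
proof -
  let ?x = "w @ certificate X w \<tau>"
  have dstep: "dstep X w (cert_assignment n X ?x) k = dstep X w \<tau> k" for k
    using certificate_assignment[OF w] by (intro dstep_cong) simp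
  have visited: "feval ?x (visited n X j) = reach X w \<tau> 1 j" if "j \<in> {1..length X}" for j
    using certificate_visited[OF w] that by simp
  have last_step: "j = 1 \<or> (\<exists>i\<in>{1..<j}. reach X w \<tau> 1 i \<and> dstep X w \<tau> i = Some j)"
    if "reach X w \<tau> 1 j" for j
    using that
  proof (cases rule: rtranclp.cases)
    case (rtrancl_into_rtrancl i)
    then show ?thesis using dstep_lt[of X w \<tau> i j] by auto
  qed simp
  show ?thesis unfolding cert_formula_sem[OF w]
  proof (intro conjI ballI impI)
    fix j assume j: "j \<in> {1..length X}" "feval ?x (visited n X j)"
    then consider "j = 1" | i where "i \<in> {1..<j}" "reach X w \<tau> 1 i" "dstep X w \<tau> i = Some j"
      using visited last_step by blast
    then show "j = 1 \<or> (\<exists>i\<in>{1..<j}. feval ?x (visited n X i) \<and> dstep X w (cert_assignment n X ?x) i = Some j)"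
    proof cases
      case 2
      then show ?thesis using j visited[of i] dstep[of i] by auto
    qed simp
  next
    have "i0 \<in> {1..length X}" using assms(3) by (simp add: isout_def)
    then show "\<exists>i\<in>{1..length X}. feval ?x (visited n X i) \<and> isout X i"
      using visited assms(2,3) by blast
  qed
qed

lemma step_formula_size: "fsize (step_formula n X i j) \<le> 11"
proof -
  have "reply_lit n X a = Some L \<Longrightarrow> fsize L = 1" for a L
    by (cases a) (auto split: if_splits)
  then show ?thesis
    unfolding step_formula_def by (auto split: prim.split option.split)
qed

lemma fsize_cert_formula: "fsize (cert_formula n X) \<le> 20 * (length X + 1) ^ 2"
proof -
  let ?K = "length X"
  let ?steps = "\<lambda>j. Ors (map (\<lambda>i. FA (visited n X i) (step_formula n X i j)) [1..<j])"
  have steps: "fsize (?steps j) \<le> 17 * ?K + 1" if "j \<le> Suc ?K" for j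
  proof -
    have "fsize (?steps j) \<le> (13 + 4) * length [1..<j] + 1"
      using step_formula_size by (intro fsize_Ors) (auto simp: visited_def add_mono)
    also have "\<dots> \<le> 17 * ?K + 1" using that by simp
    finally show ?thesis .
  qed
  have "fsize (Ands (map (\<lambda>j. FOr (FN (visited n X j)) (FOr (FC (j = 1)) (?steps j))) [1..<Suc ?K]))
      \<le> (17 * ?K + 12 + 1) * length [1..<Suc ?K] + 1"
    using steps by (intro fsize_Ands) (auto simp: visited_def simp del: upt_Suc)
  then have clauses: "fsize (Ands (map (\<lambda>j. FOr (FN (visited n X j)) (FOr (FC (j = 1)) (?steps j)))
      [1..<Suc ?K])) \<le> (13 + 17 * ?K) * ?K + 1"
    by (simp del: upt_Suc)
  have "fsize (Ors (map (\<lambda>i. FA (visited n X i) (FC (isout X i))) [1..<Suc ?K]))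
      \<le> (3 + 4) * length [1..<Suc ?K] + 1"
    by (intro fsize_Ors) (auto simp: visited_def)
  then have outs: "fsize (Ors (map (\<lambda>i. FA (visited n X i) (FC (isout X i))) [1..<Suc ?K])) \<le> 7 * ?K + 1"
    by (simp del: upt_Suc)
  have "fsize (cert_formula n X) \<le> (13 + 17 * ?K) * ?K + 1 + (7 * ?K + 1) + 1"
    unfolding cert_formula_def fsize.simps using clauses outs by linarith
  also have "\<dots> \<le> 20 * (?K + 1) ^ 2" by (simp add: power2_eq_square algebra_simps)
  finally show ?thesis .
qed

lemma splitting_computes_iff_certificate:
  assumes "splitting_computes X n F" "length w = n" "2 * length X \<le> K"
  shows "F w \<longleftrightarrow> (\<exists>c. length c \<le> K \<and> feval (w @ c) (cert_formula n X))"
proof -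
  have run: "Deadlock \<notin> set (run X w 1 Map.empty False)"
    "F w \<longleftrightarrow> Ok True \<in> set (run X w 1 Map.empty False)"
    using assms(1,2) unfolding splitting_computes_def Let_def by auto
  show ?thesis
  proof
    assume "F w"
    then obtain \<tau> j where "reach X w \<tau> 1 j" "isout X j"
      using run_sound run(2) by blast
    then have "feval (w @ certificate X w \<tau>) (cert_formula n X)"
      using cert_formula_complete[OF assms(2)] by blast
    moreover have "length (certificate X w \<tau>) \<le> K"
      using length_params[of X] assms(3) by (simp add: length_certificate)
    ultimately show "\<exists>c. length c \<le> K \<and> feval (w @ c) (cert_formula n X)" by blast
  next
    assume "\<exists>c. length c \<le> K \<and> feval (w @ c) (cert_formula n X)"
    then obtain c where "feval (w @ c) (cert_formula n X)" by blast
    then obtain i where "reach X w (cert_assignment n X (w @ c)) 1 i" "isout X i"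
      using cert_formula_sound[OF assms(2)] by blast
    then show "F w"
      using run run_complete[OF run(1), of "cert_assignment n X (w @ c)"] by (auto simp: extends_def)
  qed
qed

lemma certificate_length_bound:
  assumes "2 \<le> n" shows "2 * (a * n ^ e + a) \<le> n ^ (e + 4 * a)"
proof -
  have "2 * (a * n ^ e + a) \<le> 4 * a * n ^ e"
    using assms by (simp add: algebra_simps)
  also have "\<dots> \<le> n ^ (4 * a) * n ^ e"
    using power_gt_expt[of n "4 * a"] assms by (intro mult_le_mono1) simp
  finally show ?thesis by (simp add: power_add mult.commute)
qed

lemma P_lsis_programs:
  assumes "f \<in> P_lsis"
  obtains a e X where
    "\<And>n. X n \<in> SIS_br" "\<And>n. length (X n) \<le> a * n ^ e + a" "\<And>n. splitting_computes (X n) n (f n)"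
proof -
  obtain h where "poly_bounded h" and programs:
    "\<forall>n. \<exists>X\<in>SIS_br. length X \<le> h n \<and> splitting_computes X n (f n)"
    using assms by (auto simp: P_lsis_def)
  moreover obtain a e where "\<forall>n. h n \<le> a * n ^ e + a" using \<open>poly_bounded h\<close> by (auto simp: poly_bounded_def)
  moreover obtain X where "\<forall>n. X n \<in> SIS_br \<and> length (X n) \<le> h n \<and> splitting_computes (X n) n (f n)"
    using programs by metis
  ultimately show ?thesis using that by (meson le_trans)
qed

theorem P_lsis_subset_NPpoly:
  assumes "f \<in> P_lsis" shows "lang_of f \<in> NPpoly"
proof -
  obtain a e X where size: "\<And>n. length (X n) \<le> a * n ^ e + a"
    and computes: "\<And>n. splitting_computes (X n) n (f n)"
    using P_lsis_programs[OF assms] by metis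
  define \<Phi> where "\<Phi> n = (if n \<le> 1 then shannon (f n) n else cert_formula n (X n))" for n
  define g where "g w c = feval (w @ c) (\<Phi> (length w))" for w c
  define k where "k = e + 4 * a"
  define h where "h N = 20 * (a * N ^ e + a + 1) ^ 2 + 11" for N
  have "poly_bounded h"
    unfolding h_def by (intro poly_bounded_if_growth poly_growth_intros)
  moreover have "mono h"
    unfolding h_def by (intro monoI add_le_mono1 mult_le_mono2 power_mono) auto
  moreover have "fsize (\<Phi> n) \<le> h n" for n
  proof (cases "n \<le> 1")
    case True
    then have "fsize (\<Phi> n) \<le> 11 ^ 1" using fsize_shannon[of "f n" n] power_increasing[of n 1 "11::nat"]
      by (simp add: \<Phi>_def)
    then show ?thesis by (simp add: h_def)
  next
    case False
    have "fsize (\<Phi> n) \<le> 20 * (length (X n) + 1) ^ 2" using False fsize_cert_formula by (simp add: \<Phi>_def)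
    also have "\<dots> \<le> 20 * (a * n ^ e + a + 1) ^ 2" using size by (intro mult_le_mono2 power_mono) auto
    finally show ?thesis by (simp add: h_def)
  qed
  ultimately have "Ppoly2 g" unfolding g_def by (rule formula_family_Ppoly2)
  moreover have "w \<in> lang_of f \<longleftrightarrow> (\<exists>c. length c \<le> length w ^ k \<and> g w c)" for w
  proof (cases "length w \<le> 1")
    case True
    then have "g w c = f (length w) w" for c by (simp add: g_def \<Phi>_def feval_shannon)
    moreover have "length ([] :: bool list) \<le> length w ^ k" by simp
    ultimately show ?thesis unfolding lang_of_def mem_Collect_eq by blast
  next
    case False
    have "2 * length (X (length w)) \<le> 2 * (a * length w ^ e + a)"
      by (rule mult_le_mono2[OF size])
    also have "\<dots> \<le> length w ^ k" using certificate_length_bound False by (simp add: k_def)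
    finally have "2 * length (X (length w)) \<le> length w ^ k" .
    then show ?thesis
      using splitting_computes_iff_certificate[OF computes refl] False
      by (simp add: lang_of_def g_def \<Phi>_def)
  qed
  ultimately show ?thesis unfolding NPpoly_def by blast
qed

theorem theorem12:
  shows "lang_of ` P_lsis = NPpoly"
  using P_lsis_subset_NPpoly NPpoly_subset_P_lsis by blast

end
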